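(* Suppose $\mathcal R_1,\mathcal R_2\subset\mathcal G$ have Property 2. Then the seminorms $\|\cdot\|_{\mathcal R_1,0,0}$, $\|\cdot\|_{\mathcal R_2,0,0}$, $[\cdot]_{\mathcal R_1,0,0}$ and $[\cdot]_{\mathcal R_2,0,0}$ on $U_{\mathrm{per}}$ are equivalent, and their kernel is $U_{\mathrm{iso},0,0}\cap U_{\mathrm{per}}$.
   Context: Euclidean group: $\mathrm E(n)$ consists of pairs $(A|b)$, $A\in\mathrm O(n)$, $b\in\mathbb R^n$, acting by $(A|b)\cdot x=Ax+b$, product $(A_1|b_1)(A_2|b_2)=(A_1A_2|b_1+A_1b_2)$; $\mathrm{rot}(A|b)=A$. Standing setting: $d=d_1+d_2$; $\mathcal S<\mathrm E(d_2)$ is a space group with translation subgroup $\mathcal T_{\mathcal S}$; $A\oplus(B|b)=(\mathrm{diag}(A,B)|(0,b))$; $\mathcal G$ is a discrete subgroup of $\mathrm E(d)$ contained in $\{A\oplus s:A\in\mathrm O(d_1),s\in\mathcal S\}$ projecting onto $\mathcal S$; $\mathcal T\subset\mathcal G$ maps bijectively onto $\mathcal T_{\mathcal S}$. There is $m_0\in\mathbb N$ such that $\mathcal T^N=\{t^N:t\in\mathcal T\}$ is a normal subgroup iff $N\in\mathcal M=m_0\mathbb N$, then isomorphic to $\mathbb Z^{d_2}$ of finite index; $\mathcal C_N$ is a fixed set of representatives of $\mathcal G/\mathcal T^N$. $U_{\mathrm{per}}$: maps $u:\mathcal G\to\mathbb R^d$ that are $\mathcal T^N$-periodic for some $N\in\mathcal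 M$. $x_0\in\mathbb R^d$ with $g\mapsto g\cdot x_0$ injective; $d_{\mathrm{aff}}=\dim\mathrm{aff}(\mathcal G\cdot x_0)$; assumed $\mathcal G\cdot x_0\subset\{0_{d-d_{\mathrm{aff}}}\}\times\mathbb R^{d_{\mathrm{aff}}}$ and $\mathcal G$ acts trivially on $\mathbb R^{d-d_{\mathrm{aff}}}\times\{0\}$. For $\mathcal R\subset\mathcal G$, maps $v:\mathcal R\to\mathbb R^d$: $U_{\mathrm{trans}}(\mathcal R)$: $\exists a\in\mathbb R^d$, $\mathrm{rot}(g)v(g)=a$ on $\mathcal R$; $U_{\mathrm{rot},0,0}(\mathcal R)$: $\exists S\in\mathrm{Skew}(d_1)$ with $\mathrm{rot}(g)v(g)=(S\oplus0_{d_2\times d_2})(g\cdot x_0-x_0)$ on $\mathcal R$; $U_{\mathrm{iso},0,0}(\mathcal R)=U_{\mathrm{trans}}(\mathcal R)+U_{\mathrm{rot},0,0}(\mathcal R)$, and $U_{\mathrm{iso},0,0}:=U_{\mathrm{iso},0,0}(\mathcal G)$. Discrete derivative: $\nabla_{\mathcal R}u(g)(h)=u(gh)-\mathrm{rot}(h)^Tu(g)$. For finite $\mathcal R$ and $\mathcal T^N$-periodic $u$: $\|u\|_{\mathcal R,0,0}=\big(\frac1{|\mathcal C_N|}\sum_{g\in\mathcal C_N}\mathrm{dist}(u(g\,\cdot)|_{\mathcal R},U_{\mathrm{iso},0,0}(\mathcal R))^2\big)^{1/2}$ and $[u]_{\mathcal R,0,0}=\big(\frac1{|\mathcal C_N|}\sum_{g\in\mathcal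 C_N}\mathrm{dist}(\nabla_{\mathcal R}u(g),U_{\mathrm{rot},0,0}(\mathcal R))^2\big)^{1/2}$ (Euclidean distances in $(\mathbb R^d)^{\mathcal R}$). Property 1: $\mathcal R$ finite, $\mathrm{id}\in\mathcal R$, $\mathrm{aff}(\mathcal R\cdot x_0)=\mathrm{aff}(\mathcal G\cdot x_0)$. Property 2: $\mathcal R$ finite, and there are $\mathcal R',\mathcal R''$ with $\mathrm{id}\in\mathcal R'$, $\mathcal R'$ generating $\mathcal G$, $\mathcal R''$ with Property 1, and $\{gh:g\in\mathcal R',h\in\mathcal R''\}\subset\mathcal R$. *)

theory Defs
  imports Complex_Main "Jordan_Normal_Form.Matrix"
begin

text \<open>Vectors in R^n are JNF vectors of dimension n, matrices are JNF matrices.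
  An element (A|b) of E(n) is represented by the pair (A, b).\<close>

type_synonym euc = "real mat \<times> real vec"

definition orth_mat :: "nat \<Rightarrow> real mat set" where
  "orth_mat n = {A. A \<in> carrier_mat n n \<and> A * A\<^sup>T = 1\<^sub>m n}"

definition Euc :: "nat \<Rightarrow> euc set" where
  "Euc n = {(A, b). A \<in> orth_mat n \<and> b \<in> carrier_vec n}"

definition emult :: "euc \<Rightarrow> euc \<Rightarrow> euc" where
  "emult g h = (fst g * fst h, snd g + fst g *\<^sub>v snd h)"

definition eact :: "euc \<Rightarrow> real vec \<Rightarrow> real vec" where
  "eact g x = fst g *\<^sub>v x + snd g"

definition rot :: "euc \<Rightarrow> real mat" where
  "rot g = fst g"

definition eid :: "nat \<Rightarrow> euc" where
  "eid n = (1\<^sub>m n, 0\<^sub>v n)"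

definition einv :: "euc \<Rightarrow> euc" where
  "einv g = ((fst g)\<^sup>T, - ((fst g)\<^sup>T *\<^sub>v snd g))"

primrec epow :: "nat \<Rightarrow> euc \<Rightarrow> nat \<Rightarrow> euc" where
  "epow n g 0 = eid n"
| "epow n g (Suc k) = emult g (epow n g k)"

definition subgroup_E :: "nat \<Rightarrow> euc set \<Rightarrow> bool" where
  "subgroup_E n H \<longleftrightarrow> H \<subseteq> Euc n \<and> eid n \<in> H
     \<and> (\<forall>g\<in>H. \<forall>h\<in>H. emult g h \<in> H) \<and> (\<forall>g\<in>H. einv g \<in> H)"

definition normal_sub_E :: "nat \<Rightarrow> euc set \<Rightarrow> euc set \<Rightarrow> bool" where
  "normal_sub_E n H G \<longleftrightarrow> subgroup_E n H \<and> H \<subseteq> G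
     \<and> (\<forall>g\<in>G. \<forall>h\<in>H. emult (emult g h) (einv g) \<in> H)"

definition esqdist :: "nat \<Rightarrow> euc \<Rightarrow> euc \<Rightarrow> real" where
  "esqdist n g h = (\<Sum>i<n. \<Sum>j<n. (fst g $$ (i, j) - fst h $$ (i, j))\<^sup>2)
                   + (\<Sum>i<n. (snd g $ i - snd h $ i)\<^sup>2)"

text \<open>A subgroup is discrete iff the identity is isolated in it.\<close>
definition discrete_E :: "nat \<Rightarrow> euc set \<Rightarrow> bool" where
  "discrete_E n H \<longleftrightarrow> (\<exists>\<epsilon>>0. \<forall>g\<in>H. g \<noteq> eid n \<longrightarrow> esqdist n g (eid n) \<ge> \<epsilon>)"

inductive_set gen_E :: "nat \<Rightarrow> euc set \<Rightarrow> euc set" for n R where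
  gen_id: "eid n \<in> gen_E n R"
| gen_base: "g \<in> R \<Longrightarrow> g \<in> gen_E n R"
| gen_mult: "g \<in> gen_E n R \<Longrightarrow> h \<in> gen_E n R \<Longrightarrow> emult g h \<in> gen_E n R"
| gen_inv: "g \<in> gen_E n R \<Longrightarrow> einv g \<in> gen_E n R"

definition transl_sub :: "nat \<Rightarrow> euc set \<Rightarrow> euc set" where
  "transl_sub n S = {s \<in> S. fst s = 1\<^sub>m n}"

definition lin_indep_basis :: "nat \<Rightarrow> (nat \<Rightarrow> real vec) \<Rightarrow> bool" where
  "lin_indep_basis n V \<longleftrightarrow> (\<forall>i<n. V i \<in> carrier_vec n)
     \<and> (\<forall>c::nat \<Rightarrow> real. (\<forall>j<n. (\<Sum>i<n. c i * V i $ j) = 0) \<longrightarrow> (\<forall>i<n. c i = 0))"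

definition lattice_gen :: "nat \<Rightarrow> (nat \<Rightarrow> real vec) \<Rightarrow> real vec set" where
  "lattice_gen n V = {vec n (\<lambda>j. \<Sum>i<n. of_int (k i) * V i $ j) | k :: nat \<Rightarrow> int. True}"

definition space_group :: "nat \<Rightarrow> euc set \<Rightarrow> bool" where
  "space_group n S \<longleftrightarrow> subgroup_E n S \<and> discrete_E n S
     \<and> (\<exists>V. lin_indep_basis n V \<and> snd ` transl_sub n S = lattice_gen n V)"

definition osum :: "nat \<Rightarrow> nat \<Rightarrow> real mat \<Rightarrow> euc \<Rightarrow> euc" where
  "osum d1 d2 A s = (four_block_mat A (0\<^sub>m d1 d2) (0\<^sub>m d2 d1) (fst s), 0\<^sub>v d1 @\<^sub>v snd s)"

definition proj2 :: "nat \<Rightarrow> nat \<Rightarrow> euc \<Rightarrow> euc" where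
  "proj2 d1 d2 g = (mat d2 d2 (\<lambda>(i, j). fst g $$ (i + d1, j + d1)), vec d2 (\<lambda>i. snd g $ (i + d1)))"

definition Tpow :: "nat \<Rightarrow> euc set \<Rightarrow> nat \<Rightarrow> euc set" where
  "Tpow n T N = {epow n t N | t. t \<in> T}"

definition aff_hull :: "nat \<Rightarrow> real vec set \<Rightarrow> real vec set" where
  "aff_hull n X = {x \<in> carrier_vec n. \<exists>F c. finite F \<and> F \<subseteq> X \<and> sum c F = 1
      \<and> (\<forall>i<n. x $ i = (\<Sum>y\<in>F. c y * y $ i))}"

definition skew :: "nat \<Rightarrow> real mat set" where
  "skew n = {S. S \<in> carrier_mat n n \<and> S\<^sup>T = - S}"

definition sqn :: "real vec \<Rightarrow> real" where
  "sqn x = x \<bullet> x"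

definition U_trans :: "nat \<Rightarrow> euc set \<Rightarrow> (euc \<Rightarrow> real vec) set" where
  "U_trans d R = {v. (\<forall>g\<in>R. v g \<in> carrier_vec d)
      \<and> (\<exists>a \<in> carrier_vec d. \<forall>g\<in>R. rot g *\<^sub>v v g = a)}"

definition U_rot00 :: "nat \<Rightarrow> nat \<Rightarrow> real vec \<Rightarrow> euc set \<Rightarrow> (euc \<Rightarrow> real vec) set" where
  "U_rot00 d1 d2 x0 R = {v. (\<forall>g\<in>R. v g \<in> carrier_vec (d1 + d2))
      \<and> (\<exists>S \<in> skew d1. \<forall>g\<in>R. rot g *\<^sub>v v g =
           four_block_mat S (0\<^sub>m d1 d2) (0\<^sub>m d2 d1) (0\<^sub>m d2 d2) *\<^sub>v (eact g x0 - x0))}"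

definition U_iso00 :: "nat \<Rightarrow> nat \<Rightarrow> real vec \<Rightarrow> euc set \<Rightarrow> (euc \<Rightarrow> real vec) set" where
  "U_iso00 d1 d2 x0 R = {(\<lambda>g. v1 g + v2 g) | v1 v2.
      v1 \<in> U_trans (d1 + d2) R \<and> v2 \<in> U_rot00 d1 d2 x0 R}"

definition rdist :: "euc set \<Rightarrow> (euc \<Rightarrow> real vec) \<Rightarrow> (euc \<Rightarrow> real vec) set \<Rightarrow> real" where
  "rdist R w V = Inf ((\<lambda>v. sqrt (\<Sum>h\<in>R. sqn (w h - v h))) ` V)"

definition disc_grad :: "euc set \<Rightarrow> (euc \<Rightarrow> real vec) \<Rightarrow> euc \<Rightarrow> euc \<Rightarrow> real vec" where
  "disc_grad R u g h = u (emult g h) - (rot h)\<^sup>T *\<^sub>v u g"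

text \<open>The seminorms, computed with the set of representatives CN of G/T^N.\<close>
definition norm00 :: "nat \<Rightarrow> nat \<Rightarrow> real vec \<Rightarrow> euc set \<Rightarrow> euc set \<Rightarrow> (euc \<Rightarrow> real vec) \<Rightarrow> real" where
  "norm00 d1 d2 x0 R CN u = sqrt (1 / real (card CN) *
     (\<Sum>g\<in>CN. (rdist R (\<lambda>h. u (emult g h)) (U_iso00 d1 d2 x0 R))\<^sup>2))"

definition semi00 :: "nat \<Rightarrow> nat \<Rightarrow> real vec \<Rightarrow> euc set \<Rightarrow> euc set \<Rightarrow> (euc \<Rightarrow> real vec) \<Rightarrow> real" where
  "semi00 d1 d2 x0 R CN u = sqrt (1 / real (card CN) *
     (\<Sum>g\<in>CN. (rdist R (disc_grad R u g) (U_rot00 d1 d2 x0 R))\<^sup>2))"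

definition periodic :: "euc set \<Rightarrow> euc set \<Rightarrow> (euc \<Rightarrow> real vec) \<Rightarrow> bool" where
  "periodic G TN u \<longleftrightarrow> (\<forall>g\<in>G. \<forall>t\<in>TN. u (emult g t) = u g)"

definition property1 :: "nat \<Rightarrow> euc set \<Rightarrow> real vec \<Rightarrow> euc set \<Rightarrow> bool" where
  "property1 d G x0 R \<longleftrightarrow> finite R \<and> R \<subseteq> G \<and> eid d \<in> R
     \<and> aff_hull d ((\<lambda>g. eact g x0) ` R) = aff_hull d ((\<lambda>g. eact g x0) ` G)"

definition property2 :: "nat \<Rightarrow> euc set \<Rightarrow> real vec \<Rightarrow> euc set \<Rightarrow> bool" where
  "property2 d G x0 R \<longleftrightarrow> finite R \<and> R \<subseteq> G \<and>
     (\<exists>R' R''. eid d \<in> R' \<and> R' \<subseteq> G \<and> gen_E d R' = G \<and> property1 d G x0 R''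
        \<and> {emult g h | g h. g \<in> R' \<and> h \<in> R''} \<subseteq> R)"

end

(* Pointwise, the distance of the discrete gradient to the infinitesimal rotations is bounded by the
   distance of u to the infinitesimal isometries (on a stencil containing the identity), and it
   vanishes for rigid u. For the converse, take near-optimal skew fits X_g of the discrete gradient at
   every g and compare the resulting first-order predictions rot y u(y) ~ rot g u(g) + A_g (y.x0 - g.x0).
   Call h controlled if, uniformly in u, the prediction error at g h and the change A_(g h) - A_g on
   the directions of the orbit are bounded by the gradient distances at finitely many fixed translates
   g p. Property 1 makes the generators of Property 2 controlled, and a cocycle identity for the
   prediction errors makes the controlled elements a subgroup; so all of G is controlled, and averaging
   over C_N with periodicity gives the bound of the norm by the seminorm, for any two stencils.
   If [u] = 0, the fits at the identity converge on the orbit directions as epsilon -> 0; completing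
   the limit by skewness exhibits u as an infinitesimal isometry, which identifies the kernel. *)

theory Submission
  imports Defs "HOL-Analysis.L2_Norm" "Jordan_Normal_Form.Determinant"
begin

section \<open>Vectors and matrices\<close>

definition vnorm :: "real vec \<Rightarrow> real" where
  "vnorm x = L2_set (\<lambda>i. x $ i) {..<dim_vec x}"

lemma sqn_eq_vnorm_sq: "sqn x = (vnorm x)\<^sup>2"
  unfolding sqn_def vnorm_def L2_set_def scalar_prod_def
  by (simp add: power2_eq_square lessThan_atLeast0 sum_nonneg)

lemma vnorm_nonneg [simp]: "0 \<le> vnorm x"
  unfolding vnorm_def by simp

lemma vnorm_zero [simp]: "vnorm (0\<^sub>v n) = 0"
  unfolding vnorm_def by (simp add: L2_set_0')

lemma vnorm_add_le:
  assumes "dim_vec x = dim_vec y" shows "vnorm (x + y) \<le> vnorm x + vnorm y"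
proof -
  have "vnorm (x + y) = L2_set (\<lambda>i. x $ i + y $ i) {..<dim_vec y}"
    unfolding vnorm_def by (rule L2_set_cong) auto
  also have "\<dots> \<le> vnorm x + vnorm y"
    unfolding vnorm_def using assms L2_set_triangle_ineq by simp
  finally show ?thesis .
qed

lemma vnorm_uminus [simp]: "vnorm (- x) = vnorm x"
  unfolding vnorm_def L2_set_def by (simp add: power2_eq_square)

lemma vnorm_diff_le:
  assumes "dim_vec x = dim_vec y" shows "vnorm (x - y) \<le> vnorm x + vnorm y"
proof -
  have "x - y = x + - y" by (intro eq_vecI) (use assms in auto)
  then show ?thesis using vnorm_add_le[of x "- y"] assms by simp
qed

lemma vnorm_diff3_le:
  assumes "x \<in> carrier_vec n" "y \<in> carrier_vec n" "z \<in> carrier_vec n"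
  shows "vnorm (x - y - z) \<le> vnorm x + vnorm y + vnorm z"
  using vnorm_diff_le[of "x - y" z] vnorm_diff_le[of x y] assms by simp

lemma abs_index_le_vnorm:
  assumes "i < dim_vec x" shows "\<bar>x $ i\<bar> \<le> vnorm x"
proof -
  have "\<bar>x $ i\<bar> \<le> L2_set (\<lambda>i. \<bar>x $ i\<bar>) {..<dim_vec x}"
    by (rule member_le_L2_set) (use assms in auto)
  then show ?thesis unfolding vnorm_def L2_set_def by simp
qed

lemma L2_set_mult_left: "L2_set (\<lambda>i. c * f i) A = \<bar>c\<bar> * L2_set f A"
proof -
  have "(\<Sum>i\<in>A. (c * f i)\<^sup>2) = c\<^sup>2 * (\<Sum>i\<in>A. (f i)\<^sup>2)"
    by (simp add: power_mult_distrib sum_distrib_left)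
  then show ?thesis unfolding L2_set_def by (simp add: real_sqrt_mult)
qed

lemma L2_set_sum_le:
  "finite Y \<Longrightarrow> L2_set (\<lambda>i. \<Sum>y\<in>Y. f y i) A \<le> (\<Sum>y\<in>Y. L2_set (f y) A)"
proof (induction Y rule: finite_induct)
  case empty
  then show ?case by (simp add: L2_set_0')
next
  case (insert y Y)
  have "L2_set (\<lambda>i. \<Sum>y\<in>insert y Y. f y i) A = L2_set (\<lambda>i. f y i + (\<Sum>y\<in>Y. f y i)) A"
    using insert by simp
  also have "\<dots> \<le> L2_set (f y) A + L2_set (\<lambda>i. \<Sum>y\<in>Y. f y i) A"
    by (rule L2_set_triangle_ineq)
  also have "\<dots> \<le> L2_set (f y) A + (\<Sum>y\<in>Y. L2_set (f y) A)"
    using insert by simp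
  finally show ?case using insert by simp
qed

lemma index_mult_mat_vec_sum:
  assumes "(L :: real mat) \<in> carrier_mat n n" "v \<in> carrier_vec n" "i < n"
  shows "(L *\<^sub>v v) $ i = (\<Sum>l<n. L $$ (i, l) * v $ l)"
  using assms by (auto simp: scalar_prod_def lessThan_atLeast0)

lemma mult_mat_vec_lin_comb:
  assumes L: "(L :: real mat) \<in> carrier_mat n n" and z: "z \<in> carrier_vec n"
    and w: "\<And>r. r \<in> R \<Longrightarrow> w r \<in> carrier_vec n"
    and z_comb: "\<And>i. i < n \<Longrightarrow> z $ i = (\<Sum>r\<in>R. c r * w r $ i)" and i: "i < n"
  shows "(L *\<^sub>v z) $ i = (\<Sum>r\<in>R. c r * (L *\<^sub>v w r) $ i)"
proof -
  have "(L *\<^sub>v z) $ i = (\<Sum>l<n. \<Sum>r\<in>R. c r * (L $$ (i, l) * w r $ l))"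
    unfolding index_mult_mat_vec_sum[OF L z i]
    by (intro sum.cong refl) (simp add: z_comb sum_distrib_left mult.left_commute)
  also have "\<dots> = (\<Sum>r\<in>R. c r * (\<Sum>l<n. L $$ (i, l) * w r $ l))"
    by (subst sum.swap) (simp add: sum_distrib_left)
  also have "\<dots> = (\<Sum>r\<in>R. c r * (L *\<^sub>v w r) $ i)"
    by (intro sum.cong refl) (simp add: index_mult_mat_vec_sum[OF L w i])
  finally show ?thesis .
qed

lemma vnorm_mult_mat_vec_lin_comb_le:
  assumes R: "finite R" and L: "(L :: real mat) \<in> carrier_mat n n" and z: "z \<in> carrier_vec n"
    and w: "\<And>r. r \<in> R \<Longrightarrow> w r \<in> carrier_vec n"
    and z_comb: "\<And>i. i < n \<Longrightarrow> z $ i = (\<Sum>r\<in>R. c r * w r $ i)"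
  shows "vnorm (L *\<^sub>v z) \<le> (\<Sum>r\<in>R. \<bar>c r\<bar> * vnorm (L *\<^sub>v w r))"
proof -
  have "(L *\<^sub>v z) $ i = (\<Sum>r\<in>R. c r * (L *\<^sub>v w r) $ i)" if "i \<in> {..<n}" for i
    using mult_mat_vec_lin_comb[OF L z w z_comb] that by blast
  then have "vnorm (L *\<^sub>v z) = L2_set (\<lambda>i. \<Sum>r\<in>R. c r * (L *\<^sub>v w r) $ i) {..<n}"
    unfolding vnorm_def using L by (intro L2_set_cong) auto
  also have "\<dots> \<le> (\<Sum>r\<in>R. L2_set (\<lambda>i. c r * (L *\<^sub>v w r) $ i) {..<n})"
    using R by (rule L2_set_sum_le)
  also have "\<dots> = (\<Sum>r\<in>R. \<bar>c r\<bar> * vnorm (L *\<^sub>v w r))"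
    unfolding vnorm_def L2_set_mult_left using L by simp
  finally show ?thesis .
qed

lemma mat_vec_cancel:
  assumes "(A :: real mat) \<in> carrier_mat n n" "B \<in> carrier_mat n n" "A * B = 1\<^sub>m n"
    "x \<in> carrier_vec n"
  shows "A *\<^sub>v (B *\<^sub>v x) = x"
proof -
  have "A *\<^sub>v (B *\<^sub>v x) = (A * B) *\<^sub>v x"
    by (rule assoc_mult_mat_vec[symmetric]) (use assms in auto)
  then show ?thesis using assms by simp
qed

lemma assoc_mult_mat_vec3:
  assumes "(A :: real mat) \<in> carrier_mat n n" "B \<in> carrier_mat n n" "C \<in> carrier_mat n n"
    "v \<in> carrier_vec n"
  shows "(A * B * C) *\<^sub>v v = A *\<^sub>v (B *\<^sub>v (C *\<^sub>v v))"
  using assms by (simp add: assoc_mult_mat_vec[of _ n n _ n])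

lemma mult_mat_vec_zero:
  assumes "(A :: real mat) \<in> carrier_mat nr n" shows "A *\<^sub>v 0\<^sub>v n = 0\<^sub>v nr"
  using assms by (intro eq_vecI) (auto simp: scalar_prod_def)

lemma affine_err_cocycle:
  assumes "py \<in> carrier_vec n" "pg \<in> carrier_vec n" "pc \<in> carrier_vec n"
    "y \<in> carrier_vec n" "g \<in> carrier_vec n" "c \<in> carrier_vec n"
    and "(Ag :: real mat) \<in> carrier_mat n n" "Ac \<in> carrier_mat n n"
  shows "py - pg - Ag *\<^sub>v (y - g)
    = (py - pc - Ac *\<^sub>v (y - c)) + (pc - pg - Ag *\<^sub>v (c - g)) + (Ac - Ag) *\<^sub>v (y - c)"
proof -
  have "(Ac - Ag) *\<^sub>v (y - c) = Ac *\<^sub>v y - Ac *\<^sub>v c - (Ag *\<^sub>v y - Ag *\<^sub>v c)"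
    using assms by (simp add: minus_mult_distrib_mat_vec mult_minus_distrib_mat_vec)
  moreover have "Ag *\<^sub>v (y - g) = Ag *\<^sub>v y - Ag *\<^sub>v g" "Ac *\<^sub>v (y - c) = Ac *\<^sub>v y - Ac *\<^sub>v c"
    "Ag *\<^sub>v (c - g) = Ag *\<^sub>v c - Ag *\<^sub>v g"
    using assms by (simp_all add: mult_minus_distrib_mat_vec)
  ultimately show ?thesis using assms by (intro eq_vecI) auto
qed

lemma vnorm_add3_le:
  assumes "a \<in> carrier_vec n" "b \<in> carrier_vec n" "c \<in> carrier_vec n"
  shows "vnorm (a + b + c) \<le> vnorm a + vnorm b + vnorm c"
  using vnorm_add_le[of "a + b" c] vnorm_add_le[of a b] assms by simp

lemma vnorm_summand_le:
  assumes "a = b + c + w" "a \<in> carrier_vec n" "b \<in> carrier_vec n" "c \<in> carrier_vec n"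
    "w \<in> carrier_vec n"
  shows "vnorm c \<le> vnorm a + vnorm b + vnorm w" "vnorm w \<le> vnorm a + vnorm b + vnorm c"
proof -
  have "c = a - b - w" "w = a - b - c" using assms by (auto intro!: eq_vecI)
  then show "vnorm c \<le> vnorm a + vnorm b + vnorm w" "vnorm w \<le> vnorm a + vnorm b + vnorm c"
    using vnorm_diff3_le assms by metis+
qed

lemma orth_matD:
  assumes "A \<in> orth_mat n"
  shows "A \<in> carrier_mat n n" "A * A\<^sup>T = 1\<^sub>m n" "A\<^sup>T * A = 1\<^sub>m n"
proof -
  show A: "A \<in> carrier_mat n n" and AAT: "A * A\<^sup>T = 1\<^sub>m n"
    using assms unfolding orth_mat_def by auto
  show "A\<^sup>T * A = 1\<^sub>m n"
    using mat_mult_left_right_inverse[OF A _ AAT] A by auto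
qed

lemma vnorm_orth:
  assumes A: "A \<in> carrier_mat n n" and AA: "A\<^sup>T * A = 1\<^sub>m n" and x: "x \<in> carrier_vec n"
  shows "vnorm (A *\<^sub>v x) = vnorm x"
proof -
  have "sqn (A *\<^sub>v x) = (A\<^sup>T *\<^sub>v (A *\<^sub>v x)) \<bullet> x"
    unfolding sqn_def using transpose_vec_mult_scalar[OF A x, of "A *\<^sub>v x"] A x by auto
  also have "A\<^sup>T *\<^sub>v (A *\<^sub>v x) = x"
    using A AA x by (intro mat_vec_cancel) auto
  finally have "(vnorm (A *\<^sub>v x))\<^sup>2 = (vnorm x)\<^sup>2"
    unfolding sqn_eq_vnorm_sq[symmetric] sqn_def .
  then show ?thesis using vnorm_nonneg power2_eq_iff_nonneg by blast
qed

lemma skew_conj: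
  assumes X: "X \<in> skew n" and A: "A \<in> carrier_mat n n" shows "A\<^sup>T * X * A \<in> skew n"
proof -
  have Xc: "X \<in> carrier_mat n n" and XT: "X\<^sup>T = - X" using X unfolding skew_def by auto
  have At: "A\<^sup>T \<in> carrier_mat n n" and XA: "X * A \<in> carrier_mat n n" using A Xc by auto
  have "(A\<^sup>T * X * A)\<^sup>T = (A\<^sup>T * (X * A))\<^sup>T"
    using At Xc A by (simp add: assoc_mult_mat[of _ n n _ n _ n])
  also have "\<dots> = (X * A)\<^sup>T * A\<^sup>T\<^sup>T" by (rule transpose_mult[OF At XA])
  also have "(X * A)\<^sup>T = A\<^sup>T * X\<^sup>T" by (rule transpose_mult[OF Xc A])
  also have "A\<^sup>T * X\<^sup>T * A\<^sup>T\<^sup>T = - (A\<^sup>T * X * A)"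
    unfolding XT using At Xc A by (simp add: assoc_mult_mat[of _ n n _ n _ n])
  finally show ?thesis unfolding skew_def using At Xc A by auto
qed

section \<open>The Euclidean group\<close>

lemma EucD:
  assumes "g \<in> Euc n"
  shows "fst g \<in> carrier_mat n n" "snd g \<in> carrier_vec n" "fst g \<in> orth_mat n"
    "fst g * (fst g)\<^sup>T = 1\<^sub>m n" "(fst g)\<^sup>T * fst g = 1\<^sub>m n"
  using assms orth_matD[of "fst g" n] unfolding Euc_def by auto

lemma emult_assoc:
  assumes "a \<in> Euc n" "b \<in> Euc n" "c \<in> Euc n"
  shows "emult (emult a b) c = emult a (emult b c)"
proof -
  obtain A x B y C z where abc: "a = (A, x)" "b = (B, y)" "c = (C, z)" by force
  have "A \<in> carrier_mat n n" "B \<in> carrier_mat n n" "C \<in> carrier_mat n n"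
    "x \<in> carrier_vec n" "y \<in> carrier_vec n" "z \<in> carrier_vec n"
    using EucD assms abc by fastforce+
  then have "A * B * C = A * (B * C)" and "x + A *\<^sub>v y + (A * B) *\<^sub>v z = x + A *\<^sub>v (y + B *\<^sub>v z)"
    by (simp_all add: mult_add_distrib_mat_vec)
  then show ?thesis unfolding abc emult_def by simp
qed

lemma emult_eid_left [simp]: "g \<in> Euc n \<Longrightarrow> emult (eid n) g = g"
  using EucD[of g n] unfolding emult_def eid_def by (cases g) auto

lemma emult_eid_right [simp]: "g \<in> Euc n \<Longrightarrow> emult g (eid n) = g"
  using EucD[of g n] unfolding emult_def eid_def by (cases g) auto

lemma mult_mat_vec_uminus:
  assumes "(A :: real mat) \<in> carrier_mat nr nc" "v \<in> carrier_vec nc"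
  shows "A *\<^sub>v (- v) = - (A *\<^sub>v v)"
  using assms by (intro eq_vecI) (auto simp: scalar_prod_uminus_right)

lemma emult_einv_right:
  assumes "g \<in> Euc n" shows "emult g (einv g) = eid n"
proof -
  obtain A x where g: "g = (A, x)" by force
  have A: "A \<in> carrier_mat n n" "x \<in> carrier_vec n" "A * A\<^sup>T = 1\<^sub>m n"
    using EucD assms g by fastforce+
  then have "A *\<^sub>v (- (A\<^sup>T *\<^sub>v x)) = - x"
    by (simp add: mult_mat_vec_uminus mat_vec_cancel)
  then show ?thesis unfolding g emult_def einv_def eid_def using A by simp
qed

lemma emult_einv_left:
  assumes "g \<in> Euc n" shows "emult (einv g) g = eid n"
proof -
  obtain A x where g: "g = (A, x)" by force
  have "A \<in> carrier_mat n n" "x \<in> carrier_vec n" "A\<^sup>T * A = 1\<^sub>m n"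
    using EucD assms g by fastforce+
  then show ?thesis unfolding g emult_def einv_def eid_def by simp
qed

lemma einv_einv:
  assumes "g \<in> Euc n" shows "einv (einv g) = g"
proof -
  obtain A x where g: "g = (A, x)" by force
  have A: "A \<in> carrier_mat n n" "x \<in> carrier_vec n" "A * A\<^sup>T = 1\<^sub>m n"
    using EucD assms g by fastforce+
  then have "A *\<^sub>v (- (A\<^sup>T *\<^sub>v x)) = - x"
    by (simp add: mult_mat_vec_uminus mat_vec_cancel)
  then show ?thesis unfolding g einv_def using A by simp
qed

lemma rot_emult: "rot (emult g h) = rot g * rot h"
  unfolding rot_def emult_def by simp

lemma rot_eid: "rot (eid n) = 1\<^sub>m n"
  unfolding rot_def eid_def by simp

lemma eact_carrier: "g \<in> Euc n \<Longrightarrow> x \<in> carrier_vec n \<Longrightarrow> eact g x \<in> carrier_vec n"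
  unfolding eact_def using EucD(1,2)[of g n] by simp

lemma eact_eid: "x \<in> carrier_vec n \<Longrightarrow> eact (eid n) x = x"
  unfolding eact_def eid_def by simp

lemma eact_diff:
  assumes "g \<in> Euc n" "x \<in> carrier_vec n" "y \<in> carrier_vec n"
  shows "eact g y - eact g x = rot g *\<^sub>v (y - x)"
  using EucD(1,2)[OF assms(1)] assms(2,3)
  unfolding eact_def rot_def by (intro eq_vecI) (auto simp: mult_minus_distrib_mat_vec)

lemma eact_emult:
  assumes "g \<in> Euc n" "h \<in> Euc n" "x \<in> carrier_vec n"
  shows "eact (emult g h) x = eact g (eact h x)"
  using EucD(1,2)[OF assms(1)] EucD(1,2)[OF assms(2)] assms(3)
  unfolding eact_def emult_def by (intro eq_vecI) (auto simp: mult_add_distrib_mat_vec)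

section \<open>Real inequalities and distances\<close>

lemma le_if_le_add_mult_eps:
  assumes "\<And>\<epsilon>. 0 < \<epsilon> \<Longrightarrow> \<epsilon> \<le> 1 \<Longrightarrow> (x :: real) \<le> a + K * \<epsilon>"
  shows "x \<le> a"
proof (rule field_le_epsilon)
  fix e :: real assume e: "0 < e"
  define \<epsilon> where "\<epsilon> = min 1 (e / (\<bar>K\<bar> + 1))"
  have \<epsilon>: "0 < \<epsilon>" "\<epsilon> \<le> 1" unfolding \<epsilon>_def using e by auto
  have "K * \<epsilon> \<le> \<bar>K\<bar> * \<epsilon>" using \<epsilon> by (simp add: mult_right_mono)
  also have "\<dots> \<le> \<bar>K\<bar> * (e / (\<bar>K\<bar> + 1))" unfolding \<epsilon>_def by (intro mult_left_mono) auto
  also have "\<dots> \<le> e" using e by (simp add: field_simps)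
  finally show "x \<le> a + e" using assms[OF \<epsilon>] by simp
qed

lemma eq_if_abs_diff_le_mult_eps:
  assumes "\<And>\<epsilon>. 0 < \<epsilon> \<Longrightarrow> \<bar>(a :: real) - b\<bar> \<le> K * \<epsilon>" shows "a = b"
proof -
  have "\<bar>a - b\<bar> \<le> 0" by (rule le_if_le_add_mult_eps[where K = K]) (use assms in simp)
  then show ?thesis by simp
qed

lemma eq_if_approx:
  assumes "\<And>\<epsilon>. 0 < \<epsilon> \<Longrightarrow> \<bar>a \<epsilon> - x\<bar> \<le> K * \<epsilon>" "\<And>\<epsilon>. 0 < \<epsilon> \<Longrightarrow> \<bar>a \<epsilon> - y\<bar> \<le> K' * \<epsilon>"
  shows "(x :: real) = y"
proof (rule eq_if_abs_diff_le_mult_eps)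
  fix \<epsilon> :: real assume "0 < \<epsilon>"
  then show "\<bar>x - y\<bar> \<le> (K + K') * \<epsilon>" using assms[OF \<open>0 < \<epsilon>\<close>] by (simp add: algebra_simps)
qed

lemma square_sum_le: "((a :: real) + b)\<^sup>2 \<le> 2 * a\<^sup>2 + 2 * b\<^sup>2"
proof -
  have "0 \<le> (a - b)\<^sup>2" by simp
  then show ?thesis unfolding power2_eq_square by (simp add: algebra_simps)
qed

lemma sum_squared_le_card_mult: "(\<Sum>i\<in>I. a i)\<^sup>2 \<le> real (card I) * (\<Sum>i\<in>I. (a i)\<^sup>2)"
proof -
  have "\<bar>\<Sum>i\<in>I. a i\<bar> \<le> (\<Sum>i\<in>I. \<bar>a i\<bar> * \<bar>1\<bar>)" by (simp add: sum_abs)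
  also have "\<dots> \<le> L2_set a I * L2_set (\<lambda>_. 1) I" by (rule L2_set_mult_ineq)
  finally have "\<bar>\<Sum>i\<in>I. a i\<bar> \<le> L2_set a I * sqrt (real (card I))"
    by (simp add: L2_set_constant)
  then have "\<bar>\<Sum>i\<in>I. a i\<bar>\<^sup>2 \<le> (L2_set a I * sqrt (real (card I)))\<^sup>2"
    by (intro power_mono) auto
  also have "\<dots> = (\<Sum>i\<in>I. (a i)\<^sup>2) * real (card I)"
    unfolding power_mult_distrib L2_set_def by (simp add: sum_nonneg)
  finally show ?thesis by (simp add: ac_simps)
qed

lemma sum_list_squared_le:
  "(sum_list (map f P))\<^sup>2 \<le> real (length P) * sum_list (map (\<lambda>p. (f p)\<^sup>2) P)"
  using sum_squared_le_card_mult[of "\<lambda>i. f (P ! i)" "{0..<length P}"]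
  by (simp add: sum_list_sum_nth)

lemma sum_sum_list_swap: "(\<Sum>g\<in>A. sum_list (map (F g) P)) = sum_list (map (\<lambda>p. \<Sum>g\<in>A. F g p) P)"
  by (induction P) (simp_all add: sum.distrib)

lemma rdist_le:
  assumes "v \<in> V" shows "rdist R w V \<le> sqrt (\<Sum>h\<in>R. sqn (w h - v h))"
  unfolding rdist_def
proof (rule cInf_lower)
  show "bdd_below ((\<lambda>v. sqrt (\<Sum>h\<in>R. sqn (w h - v h))) ` V)"
    by (rule bdd_belowI[of _ 0]) (auto simp: sqn_eq_vnorm_sq intro!: sum_nonneg)
qed (use assms in auto)

lemma rdist_nonneg:
  assumes "V \<noteq> {}" shows "0 \<le> rdist R w V"
  unfolding rdist_def using assms
  by (intro cInf_greatest) (auto simp: sqn_eq_vnorm_sq intro!: sum_nonneg)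

lemma rdist_approx:
  assumes "V \<noteq> {}" "rdist R w V < y"
  obtains v where "v \<in> V" "sqrt (\<Sum>h\<in>R. sqn (w h - v h)) < y"
  using cInf_lessD[of "(\<lambda>v. sqrt (\<Sum>h\<in>R. sqn (w h - v h))) ` V" y] assms
  unfolding rdist_def by auto

lemma rdist_cong:
  assumes "\<And>h. h \<in> R \<Longrightarrow> w h = w' h" shows "rdist R w V = rdist R w' V"
  unfolding rdist_def using assms by (intro arg_cong[where f = Inf] image_cong refl sum.cong) auto

lemma vnorm_le_sqrt_sum:
  assumes "finite R" "k \<in> R" shows "vnorm (f k) \<le> sqrt (\<Sum>h\<in>R. sqn (f h))"
proof -
  have "sqn (f k) \<le> (\<Sum>h\<in>R. sqn (f h))"
    using assms by (intro member_le_sum) (auto simp: sqn_eq_vnorm_sq)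
  then show ?thesis by (simp add: sqn_eq_vnorm_sq real_le_rsqrt)
qed

definition rms :: "'a set \<Rightarrow> ('a \<Rightarrow> real) \<Rightarrow> real" where
  "rms A f = sqrt (1 / real (card A) * (\<Sum>g\<in>A. (f g)\<^sup>2))"

lemma rms_nonneg: "0 \<le> rms A f"
  unfolding rms_def by (simp add: sum_nonneg)

lemma rms_le_sqrt_mult:
  assumes "0 \<le> K" and "(\<Sum>g\<in>A. (f g)\<^sup>2) \<le> K * (\<Sum>g\<in>A. (h g)\<^sup>2)"
  shows "rms A f \<le> sqrt K * rms A h"
proof -
  have "1 / real (card A) * (\<Sum>g\<in>A. (f g)\<^sup>2) \<le> K * (1 / real (card A) * (\<Sum>g\<in>A. (h g)\<^sup>2))"
    using mult_left_mono[OF assms(2), of "1 / real (card A)"] by simp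
  then show ?thesis unfolding rms_def by (simp add: real_sqrt_mult[symmetric])
qed

lemma rms_le_mult:
  assumes "\<And>g. g \<in> A \<Longrightarrow> 0 \<le> f g" "\<And>g. g \<in> A \<Longrightarrow> f g \<le> b * h g"
  shows "rms A f \<le> \<bar>b\<bar> * rms A h"
proof -
  have "(\<Sum>g\<in>A. (f g)\<^sup>2) \<le> (\<Sum>g\<in>A. (b * h g)\<^sup>2)"
    using assms by (intro sum_mono power_mono) auto
  also have "\<dots> = b\<^sup>2 * (\<Sum>g\<in>A. (h g)\<^sup>2)" by (simp add: power_mult_distrib sum_distrib_left)
  finally have "rms A f \<le> sqrt (b\<^sup>2) * rms A h" by (rule rms_le_sqrt_mult[OF zero_le_power2])
  then show ?thesis by simp
qed

lemma rms_eq_0_iff: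
  assumes "finite A" "A \<noteq> {}" shows "rms A f = 0 \<longleftrightarrow> (\<forall>g\<in>A. f g = 0)"
  using assms unfolding rms_def by (simp add: sum_nonneg_eq_0_iff)

lemma le_mult_factor_mono: "x \<le> a * y \<Longrightarrow> a \<le> c \<Longrightarrow> 0 \<le> y \<Longrightarrow> (x :: real) \<le> c * y"
  using mult_right_mono[of a c y] by linarith

lemma le_all_pairs_of_cross_bounds:
  fixes n1 n2 s1 s2 A B :: real
  assumes nonneg: "0 \<le> n1" "0 \<le> n2" "0 \<le> s1" "0 \<le> s2" and AB: "1 \<le> A" "1 \<le> B"
    and ns: "n1 \<le> A * s1" "n1 \<le> A * s2" "n2 \<le> A * s1" "n2 \<le> A * s2"
    and sn: "s1 \<le> B * n1" "s2 \<le> B * n2"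
  shows "\<forall>p\<in>{n1, n2, s1, s2}. \<forall>q\<in>{n1, n2, s1, s2}. p \<le> A * B * B * q"
proof -
  have B0: "0 \<le> B" using AB by simp
  have BB: "1 \<le> B * B" using mult_mono[OF AB(2) AB(2) B0 zero_le_one] by simp
  have c: "A \<le> A * B * B" "A * B \<le> A * B * B" "B * A \<le> A * B * B"
    using mult_left_mono[OF BB, of A] mult_left_mono[OF AB(2), of "A * B"] AB
    by (simp_all add: ac_simps)
  have n_s: "n \<le> A * B * B * s" if "n \<le> A * s" "0 \<le> s" for n s
    using le_mult_factor_mono[OF that(1) c(1) that(2)] .
  have A0: "0 \<le> A" using AB by simp
  have n_n: "n \<le> A * B * B * n'" if "n \<le> A * s" "s \<le> B * n'" "0 \<le> n'" for n s n'
  proof -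
    have "n \<le> (A * B) * n'"
      using order_trans[OF that(1) mult_left_mono[OF that(2) A0]] by (simp add: mult.assoc)
    then show ?thesis using le_mult_factor_mono[OF _ c(2) that(3)] by blast
  qed
  have s_s: "s \<le> A * B * B * s'" if "s \<le> B * n" "n \<le> A * s'" "0 \<le> s'" for s n s'
  proof -
    have "s \<le> (B * A) * s'"
      using order_trans[OF that(1) mult_left_mono[OF that(2) B0]] by (simp add: mult.assoc)
    then show ?thesis using le_mult_factor_mono[OF _ c(3) that(3)] by blast
  qed
  have s_n: "s \<le> A * B * B * n'" if "s \<le> B * n" "n \<le> A * s'" "s' \<le> B * n'" for s n s' n'
  proof -
    have "n \<le> A * (B * n')" using order_trans[OF that(2) mult_left_mono[OF that(3) A0]] .
    then have "s \<le> B * (A * (B * n'))" using order_trans[OF that(1) mult_left_mono[OF _ B0]] by blast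
    then show ?thesis by (simp add: ac_simps)
  qed
  show ?thesis
    using n_s[OF ns(1)] n_s[OF ns(2)] n_s[OF ns(3)] n_s[OF ns(4)]
      n_n[OF ns(1) sn(1)] n_n[OF ns(2) sn(2)] n_n[OF ns(3) sn(1)] n_n[OF ns(4) sn(2)]
      s_s[OF sn(1) ns(1)] s_s[OF sn(1) ns(2)] s_s[OF sn(2) ns(3)] s_s[OF sn(2) ns(4)]
      s_n[OF sn(1) ns(1) sn(1)] s_n[OF sn(1) ns(2) sn(2)] s_n[OF sn(2) ns(3) sn(1)] s_n[OF sn(2) ns(4) sn(2)]
      nonneg by auto
qed

locale objective_structure =
  fixes d1 d2 d daff m0 :: nat and S G T :: "euc set" and x0 :: "real vec"
    and C :: "nat \<Rightarrow> euc set"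
  assumes d_def: "d = d1 + d2"
    and S_sg: "space_group d2 S"
    and G_sub: "subgroup_E d G"
    and G_form: "G \<subseteq> {osum d1 d2 A s | A s. A \<in> orth_mat d1 \<and> s \<in> S}"
    and M_char: "\<forall>N\<ge>1. normal_sub_E d (Tpow d T N) G \<longleftrightarrow> m0 dvd N"
    and C_rep: "\<forall>N\<ge>1. m0 dvd N \<longrightarrow> C N \<subseteq> G \<and> finite (C N)
                  \<and> (\<forall>g\<in>G. \<exists>!c\<in>C N. \<exists>t\<in>Tpow d T N. g = emult c t)"
    and x0_dim: "x0 \<in> carrier_vec d"
    and x0_inj: "inj_on (\<lambda>g. eact g x0) G"
    and aff_coord: "aff_hull d ((\<lambda>g. eact g x0) ` G) = {x \<in> carrier_vec d. \<forall>i < d - daff. x $ i = 0}"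
    and triv_act: "\<forall>g\<in>G. \<forall>x\<in>carrier_vec d. (\<forall>i. d - daff \<le> i \<and> i < d \<longrightarrow> x $ i = 0)
                      \<longrightarrow> rot g *\<^sub>v x = x"
begin

lemma G_Euc: "g \<in> G \<Longrightarrow> g \<in> Euc d"
  using G_sub unfolding subgroup_E_def by auto

lemma eid_G [simp]: "eid d \<in> G"
  using G_sub unfolding subgroup_E_def by auto

lemma emult_G [simp]: "g \<in> G \<Longrightarrow> h \<in> G \<Longrightarrow> emult g h \<in> G"
  using G_sub unfolding subgroup_E_def by auto

lemma einv_G [simp]: "g \<in> G \<Longrightarrow> einv g \<in> G"
  using G_sub unfolding subgroup_E_def by auto

lemma emult_assoc_G: "a \<in> G \<Longrightarrow> b \<in> G \<Longrightarrow> c \<in> G \<Longrightarrow> emult (emult a b) c = emult a (emult b c)"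
  using emult_assoc G_Euc by blast

lemma emult_eid_left_G [simp]: "g \<in> G \<Longrightarrow> emult (eid d) g = g"
  using G_Euc by simp

lemma emult_eid_right_G [simp]: "g \<in> G \<Longrightarrow> emult g (eid d) = g"
  using G_Euc by simp

lemma emult_einv_right_G [simp]: "g \<in> G \<Longrightarrow> emult g (einv g) = eid d"
  using G_Euc emult_einv_right by blast

lemma emult_einv_left_G [simp]: "g \<in> G \<Longrightarrow> emult (einv g) g = eid d"
  using G_Euc emult_einv_left by blast

lemma einv_einv_G [simp]: "g \<in> G \<Longrightarrow> einv (einv g) = g"
  using G_Euc einv_einv by blast

lemma emult_emult_einv_G: "k \<in> G \<Longrightarrow> x \<in> G \<Longrightarrow> emult k (emult (einv k) x) = x"
  using emult_assoc_G[of k "einv k" x] by simp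

lemma emult_einv_emult_G: "k \<in> G \<Longrightarrow> x \<in> G \<Longrightarrow> emult (einv k) (emult k x) = x"
  using emult_assoc_G[of "einv k" k x] by simp

lemma emult_cancel_right_G: "x \<in> G \<Longrightarrow> p \<in> G \<Longrightarrow> emult x p = y \<Longrightarrow> x = emult y (einv p)"
  using emult_assoc_G[of x p "einv p"] by auto

lemma rot_G:
  assumes "g \<in> G"
  shows "rot g \<in> carrier_mat d d" "(rot g)\<^sup>T \<in> carrier_mat d d"
    "rot g * (rot g)\<^sup>T = 1\<^sub>m d" "(rot g)\<^sup>T * rot g = 1\<^sub>m d"
  using EucD[OF G_Euc[OF assms]] unfolding rot_def by auto

lemma vnorm_rot: "g \<in> G \<Longrightarrow> x \<in> carrier_vec d \<Longrightarrow> vnorm (rot g *\<^sub>v x) = vnorm x"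
  using vnorm_orth rot_G by blast

lemma vnorm_rot_transpose: "g \<in> G \<Longrightarrow> x \<in> carrier_vec d \<Longrightarrow> vnorm ((rot g)\<^sup>T *\<^sub>v x) = vnorm x"
  using vnorm_orth[of "(rot g)\<^sup>T" d x] rot_G[of g] by simp

definition orb :: "euc \<Rightarrow> real vec" where
  "orb g = eact g x0"

text \<open>By \<open>aff_coord\<close>, \<open>Vaff\<close> is the space of directions of the affine hull of the orbit \<open>G \<cdot> x0\<close>.\<close>

definition Vaff :: "real vec set" where
  "Vaff = {z \<in> carrier_vec d. \<forall>i < d - daff. z $ i = 0}"

lemma orb_carrier: "g \<in> G \<Longrightarrow> orb g \<in> carrier_vec d"
  unfolding orb_def using eact_carrier G_Euc x0_dim by blast

lemma orb_eid [simp]: "orb (eid d) = x0"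
  unfolding orb_def using eact_eid x0_dim by blast

lemma orb_emult:
  assumes "g \<in> G" "h \<in> G" shows "orb (emult g h) - orb g = rot g *\<^sub>v (orb h - x0)"
proof -
  have "orb (emult g h) = eact g (orb h)"
    unfolding orb_def using eact_emult G_Euc assms x0_dim by blast
  then show ?thesis
    using eact_diff[OF G_Euc[OF assms(1)] x0_dim orb_carrier[OF assms(2)]]
    unfolding orb_def by (simp add: eact_eid)
qed

lemma orb_diff_carrier: "g \<in> G \<Longrightarrow> orb g - x0 \<in> carrier_vec d"
  using orb_carrier x0_dim by simp

lemma Vaff_carrier: "z \<in> Vaff \<Longrightarrow> z \<in> carrier_vec d"
  unfolding Vaff_def by auto

lemma orb_in_Vaff:
  assumes "g \<in> G" shows "orb g \<in> Vaff"
proof -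
  have "orb g \<in> aff_hull d ((\<lambda>g. eact g x0) ` G)"
    using assms orb_carrier unfolding aff_hull_def orb_def
    by (auto intro!: exI[of _ "{eact g x0}"] exI[of _ "\<lambda>_. 1"])
  then show ?thesis unfolding aff_coord Vaff_def .
qed

lemma orb_diff_in_Vaff:
  assumes "g \<in> G" "h \<in> G" shows "orb g - orb h \<in> Vaff"
proof -
  have "orb g \<in> Vaff" "orb h \<in> Vaff" using assms orb_in_Vaff by auto
  then show ?thesis unfolding Vaff_def by auto
qed

lemma rot_transpose_Vaff:
  assumes g: "g \<in> G" and z: "z \<in> Vaff" shows "(rot g)\<^sup>T *\<^sub>v z \<in> Vaff"
proof -
  have zc: "z \<in> carrier_vec d" using z Vaff_carrier by auto
  have "((rot g)\<^sup>T *\<^sub>v z) $ i = 0" if i: "i < d - daff" for i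
  proof -
    \<comment> \<open>The first columns of a rotation in \<open>G\<close> are unit vectors, since \<open>G\<close> fixes those directions.\<close>
    have "col (rot g) i = rot g *\<^sub>v unit_vec d i"
      using rot_G[OF g] i by (intro eq_vecI) (auto simp: col_def)
    also have "\<dots> = unit_vec d i" using triv_act g i by auto
    finally have "((rot g)\<^sup>T *\<^sub>v z) $ i = unit_vec d i \<bullet> z"
      using rot_G[OF g] i by auto
    then show ?thesis using z zc i unfolding Vaff_def by auto
  qed
  then show ?thesis unfolding Vaff_def using rot_G[OF g] zc by auto
qed

section \<open>The orbit spans the directions of its affine hull\<close>

definition spans_Vaff :: "euc set \<Rightarrow> real \<Rightarrow> bool" where
  "spans_Vaff R \<Lambda> \<longleftrightarrow> 0 \<le> \<Lambda> \<and> (\<forall>z\<in>Vaff. \<exists>c. (\<forall>i<d. z $ i = (\<Sum>r\<in>R. c r * (orb r - x0) $ i))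
      \<and> (\<Sum>r\<in>R. \<bar>c r\<bar>) \<le> \<Lambda> * vnorm z)"

lemma sum_orb_indicator:
  assumes R: "finite R" "R \<subseteq> G" and F: "F \<subseteq> orb ` R"
  shows "(\<Sum>r\<in>R. if orb r \<in> F then \<phi> (orb r) else 0) = (\<Sum>y\<in>F. \<phi> y)"
proof -
  have "inj_on orb {r\<in>R. orb r \<in> F}"
    using x0_inj R unfolding orb_def[abs_def] by (auto intro: inj_on_subset)
  moreover have "orb ` {r\<in>R. orb r \<in> F} = F" using F by auto
  ultimately have "(\<Sum>r\<in>{r\<in>R. orb r \<in> F}. \<phi> (orb r)) = (\<Sum>y\<in>F. \<phi> y)"
    using sum.reindex[of orb "{r\<in>R. orb r \<in> F}" \<phi>] by simp
  then show ?thesis using R by (simp add: sum.inter_filter)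
qed

lemma unit_vec_orbit_comb:
  assumes P1: "property1 d G x0 R" and j: "d - daff \<le> j" "j < d"
  shows "\<exists>c. \<forall>i<d. unit_vec d j $ i = (\<Sum>r\<in>R. c r * (orb r - x0) $ i)"
proof -
  have R: "finite R" "R \<subseteq> G" and aff: "aff_hull d (orb ` R) = Vaff"
    using P1 unfolding property1_def orb_def[abs_def] Vaff_def aff_coord[symmetric] by auto
  have "x0 + unit_vec d j \<in> aff_hull d (orb ` R)"
    using orb_in_Vaff[OF eid_G] j unfolding aff Vaff_def by auto
  then obtain F c where F: "finite F" "F \<subseteq> orb ` R" "sum c F = 1"
    and comb: "\<forall>i<d. (x0 + unit_vec d j) $ i = (\<Sum>y\<in>F. c y * y $ i)"
    unfolding aff_hull_def by blast
  \<comment> \<open>An affine combination of orbit points, minus \<open>x0\<close>, is a linear combination of the \<open>orb r - x0\<close>.\<close>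
  define c' where "c' r = (if orb r \<in> F then c (orb r) else 0)" for r
  have sum_c': "(\<Sum>r\<in>R. c' r) = 1"
    using sum_orb_indicator[OF R F(2), of c] F(3) unfolding c'_def by simp
  have "unit_vec d j $ i = (\<Sum>r\<in>R. c' r * (orb r - x0) $ i)" if i: "i < d" for i
  proof -
    have "(\<Sum>r\<in>R. c' r * (orb r - x0) $ i) = (\<Sum>r\<in>R. c' r * orb r $ i) - (\<Sum>r\<in>R. c' r) * x0 $ i"
      using R orb_carrier x0_dim i
      by (auto simp: sum_subtractf sum_distrib_right algebra_simps intro!: sum.cong)
    also have "(\<Sum>r\<in>R. c' r * orb r $ i) = (\<Sum>r\<in>R. if orb r \<in> F then c (orb r) * orb r $ i else 0)"
      unfolding c'_def by (intro sum.cong refl) simp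
    also have "\<dots> = (\<Sum>y\<in>F. c y * y $ i)"
      by (rule sum_orb_indicator[OF R F(2)])
    also have "\<dots> = x0 $ i + unit_vec d j $ i" using comb i x0_dim by auto
    finally show ?thesis using sum_c' by simp
  qed
  then show ?thesis by blast
qed

lemma property1_spans_Vaff:
  assumes P1: "property1 d G x0 R" shows "\<exists>\<Lambda>. spans_Vaff R \<Lambda>"
proof -
  define J where "J = {d - daff..<d}"
  define cc where "cc j = (SOME c. \<forall>i<d. unit_vec d j $ i = (\<Sum>r\<in>R. c r * (orb r - x0) $ i))" for j
  have cc: "\<forall>i<d. unit_vec d j $ i = (\<Sum>r\<in>R. cc j r * (orb r - x0) $ i)" if "j \<in> J" for j
    unfolding cc_def by (rule someI_ex[OF unit_vec_orbit_comb[OF P1]]) (use that J_def in auto)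
  define \<Lambda> where "\<Lambda> = (\<Sum>r\<in>R. \<Sum>j\<in>J. \<bar>cc j r\<bar>)"
  have "\<exists>c. (\<forall>i<d. z $ i = (\<Sum>r\<in>R. c r * (orb r - x0) $ i)) \<and> (\<Sum>r\<in>R. \<bar>c r\<bar>) \<le> \<Lambda> * vnorm z"
    if z: "z \<in> Vaff" for z
  proof -
    \<comment> \<open>Expand \<open>z\<close> in the unit vectors \<open>e\<^sub>j\<close>, \<open>j \<in> J\<close>, and each \<open>e\<^sub>j\<close> in the \<open>orb r - x0\<close>.\<close>
    define c where "c r = (\<Sum>j\<in>J. z $ j * cc j r)" for r
    have "z $ i = (\<Sum>r\<in>R. c r * (orb r - x0) $ i)" if i: "i < d" for i
    proof -
      have "z $ i = (\<Sum>j\<in>J. z $ j * unit_vec d j $ i)"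
      proof (cases "i \<in> J")
        case True
        then show ?thesis using i by (simp add: J_def if_distrib cong: if_cong)
      next
        case False
        then have "z $ i = 0" using z i unfolding Vaff_def J_def by auto
        moreover have "(\<Sum>j\<in>J. z $ j * unit_vec d j $ i) = 0"
          using False i J_def by (intro sum.neutral) auto
        ultimately show ?thesis by simp
      qed
      also have "\<dots> = (\<Sum>j\<in>J. z $ j * (\<Sum>r\<in>R. cc j r * (orb r - x0) $ i))"
        using cc i by (intro sum.cong refl) auto
      also have "\<dots> = (\<Sum>r\<in>R. c r * (orb r - x0) $ i)"
        unfolding c_def by (simp add: sum_distrib_left sum_distrib_right ac_simps sum.swap[of _ J])
      finally show ?thesis .
    qed
    moreover have "(\<Sum>r\<in>R. \<bar>c r\<bar>) \<le> \<Lambda> * vnorm z"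
    proof -
      have zj: "\<bar>z $ j\<bar> \<le> vnorm z" if "j \<in> J" for j
        using abs_index_le_vnorm[of j z] that z unfolding J_def Vaff_def by auto
      have "\<bar>c r\<bar> \<le> (\<Sum>j\<in>J. vnorm z * \<bar>cc j r\<bar>)" for r
      proof -
        have "\<bar>c r\<bar> \<le> (\<Sum>j\<in>J. \<bar>z $ j\<bar> * \<bar>cc j r\<bar>)"
          unfolding c_def by (rule order_trans[OF sum_abs]) (simp add: abs_mult)
        also have "\<dots> \<le> (\<Sum>j\<in>J. vnorm z * \<bar>cc j r\<bar>)"
          using zj by (intro sum_mono) (auto intro: mult_right_mono)
        finally show ?thesis .
      qed
      then have "(\<Sum>r\<in>R. \<bar>c r\<bar>) \<le> (\<Sum>r\<in>R. \<Sum>j\<in>J. vnorm z * \<bar>cc j r\<bar>)"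
        by (rule sum_mono)
      also have "\<dots> = \<Lambda> * vnorm z"
        unfolding \<Lambda>_def by (simp add: sum_distrib_left sum_distrib_right ac_simps)
      finally show ?thesis .
    qed
    ultimately show ?thesis by blast
  qed
  moreover have "0 \<le> \<Lambda>" unfolding \<Lambda>_def by (auto intro: sum_nonneg)
  ultimately show ?thesis unfolding spans_Vaff_def by blast
qed

lemma vnorm_mult_Vaff_le:
  assumes sp: "spans_Vaff R \<Lambda>" and R: "finite R" "R \<subseteq> G" and L: "L \<in> carrier_mat d d"
    and bound: "\<And>r. r \<in> R \<Longrightarrow> vnorm (L *\<^sub>v (orb r - x0)) \<le> \<beta>" and "0 \<le> \<beta>"
    and z: "z \<in> Vaff"
  shows "vnorm (L *\<^sub>v z) \<le> \<Lambda> * \<beta> * vnorm z"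
proof -
  obtain c where c: "\<forall>i<d. z $ i = (\<Sum>r\<in>R. c r * (orb r - x0) $ i)"
    and c_sum: "(\<Sum>r\<in>R. \<bar>c r\<bar>) \<le> \<Lambda> * vnorm z"
    using sp z unfolding spans_Vaff_def by blast
  have "vnorm (L *\<^sub>v z) \<le> (\<Sum>r\<in>R. \<bar>c r\<bar> * vnorm (L *\<^sub>v (orb r - x0)))"
    using R orb_diff_carrier c
    by (intro vnorm_mult_mat_vec_lin_comb_le[OF R(1) L Vaff_carrier[OF z]]) auto
  also have "\<dots> \<le> (\<Sum>r\<in>R. \<bar>c r\<bar> * \<beta>)"
    using bound by (intro sum_mono mult_left_mono) auto
  also have "\<dots> = (\<Sum>r\<in>R. \<bar>c r\<bar>) * \<beta>"
    by (simp add: sum_distrib_right)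
  also have "\<dots> \<le> \<Lambda> * vnorm z * \<beta>"
    using c_sum \<open>0 \<le> \<beta>\<close> by (rule mult_right_mono)
  finally show ?thesis by (simp add: ac_simps)
qed

section \<open>Rigid fits of the discrete gradient\<close>

text \<open>\<open>pad X\<close> is the paper's \<open>X \<oplus> 0\<close>; \<open>grad_dist\<close> and \<open>iso_dist\<close> below are the local terms of the
  seminorms \<open>[u]\<close> and \<open>\<parallel>u\<parallel>\<close>.\<close>

definition pad :: "real mat \<Rightarrow> real mat" where
  "pad X = four_block_mat X (0\<^sub>m d1 d2) (0\<^sub>m d2 d1) (0\<^sub>m d2 d2)"

lemma skew_carrier: "X \<in> skew d1 \<Longrightarrow> X \<in> carrier_mat d1 d1"
  unfolding skew_def by auto

lemma pad_carrier: "X \<in> carrier_mat d1 d1 \<Longrightarrow> pad X \<in> carrier_mat d d"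
  unfolding pad_def d_def by auto

lemma pad_skew_carrier: "X \<in> skew d1 \<Longrightarrow> pad X \<in> carrier_mat d d"
  using pad_carrier skew_carrier by blast

lemma index_pad:
  assumes "X \<in> carrier_mat d1 d1" "i < d" "j < d"
  shows "pad X $$ (i, j) = (if i < d1 \<and> j < d1 then X $$ (i, j) else 0)"
  using assms unfolding pad_def d_def by (auto simp: index_mat_four_block)

definition stencil :: "euc set \<Rightarrow> bool" where
  "stencil R \<longleftrightarrow> finite R \<and> R \<subseteq> G"

definition displacement :: "(euc \<Rightarrow> real vec) \<Rightarrow> bool" where
  "displacement u \<longleftrightarrow> (\<forall>x\<in>G. u x \<in> carrier_vec d)"

lemma stencilD: "stencil R \<Longrightarrow> k \<in> R \<Longrightarrow> k \<in> G"
  unfolding stencil_def by auto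

lemma displacementD: "displacement u \<Longrightarrow> x \<in> G \<Longrightarrow> u x \<in> carrier_vec d"
  unfolding displacement_def by auto

lemma mem_U_trans_iff:
  "v \<in> U_trans (d1 + d2) R \<longleftrightarrow> (\<forall>g\<in>R. v g \<in> carrier_vec d)
     \<and> (\<exists>a \<in> carrier_vec d. \<forall>g\<in>R. rot g *\<^sub>v v g = a)"
  unfolding U_trans_def d_def by simp

lemma mem_U_rot00_iff:
  "v \<in> U_rot00 d1 d2 x0 R \<longleftrightarrow> (\<forall>g\<in>R. v g \<in> carrier_vec d)
     \<and> (\<exists>X \<in> skew d1. \<forall>g\<in>R. rot g *\<^sub>v v g = pad X *\<^sub>v (orb g - x0))"
  unfolding U_rot00_def pad_def orb_def d_def by simp

lemma zero_in_U_rot00: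
  assumes "stencil R" shows "(\<lambda>_. 0\<^sub>v d) \<in> U_rot00 d1 d2 x0 R"
proof -
  have "pad (0\<^sub>m d1 d1) = 0\<^sub>m d d" unfolding pad_def d_def by (rule four_block_zero_mat)
  then have "rot g *\<^sub>v 0\<^sub>v d = pad (0\<^sub>m d1 d1) *\<^sub>v (orb g - x0)" if "g \<in> R" for g
  proof -
    have g: "g \<in> G" using stencilD[OF assms that] .
    have "0\<^sub>m d d *\<^sub>v (orb g - x0) = 0\<^sub>v d"
      using orb_diff_carrier[OF g] by (intro eq_vecI) auto
    then show ?thesis using mult_mat_vec_zero[OF rot_G(1)[OF g]] \<open>pad _ = _\<close> by simp
  qed
  moreover have "0\<^sub>m d1 d1 \<in> skew d1" unfolding skew_def by auto
  ultimately show ?thesis unfolding mem_U_rot00_iff by auto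
qed

lemma zero_in_U_iso00:
  assumes "stencil R" shows "(\<lambda>_. 0\<^sub>v d) \<in> U_iso00 d1 d2 x0 R"
proof -
  have "(\<lambda>_. 0\<^sub>v d) \<in> U_trans (d1 + d2) R"
    using assms stencilD rot_G unfolding mem_U_trans_iff
    by (auto intro!: bexI[of _ "0\<^sub>v d"] simp: mult_mat_vec_zero)
  then show ?thesis
    using zero_in_U_rot00[OF assms] unfolding U_iso00_def by force
qed

definition grad_dist :: "euc set \<Rightarrow> (euc \<Rightarrow> real vec) \<Rightarrow> euc \<Rightarrow> real" where
  "grad_dist R u g = rdist R (disc_grad R u g) (U_rot00 d1 d2 x0 R)"

definition iso_dist :: "euc set \<Rightarrow> (euc \<Rightarrow> real vec) \<Rightarrow> euc \<Rightarrow> real" where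
  "iso_dist R u g = rdist R (\<lambda>h. u (emult g h)) (U_iso00 d1 d2 x0 R)"

lemma grad_dist_nonneg: "stencil R \<Longrightarrow> 0 \<le> grad_dist R u g"
  unfolding grad_dist_def using rdist_nonneg zero_in_U_rot00 by blast

lemma iso_dist_nonneg: "stencil R \<Longrightarrow> 0 \<le> iso_dist R u g"
  unfolding iso_dist_def using rdist_nonneg zero_in_U_iso00 by blast

lemma rot_disc_grad:
  assumes u: "displacement u" and g: "g \<in> G" and k: "k \<in> G"
  shows "rot k *\<^sub>v disc_grad R u g k = rot k *\<^sub>v u (emult g k) - u g"
proof -
  have ug: "u g \<in> carrier_vec d" and ugk: "u (emult g k) \<in> carrier_vec d"
    using displacementD[OF u] g k by auto
  have "rot k *\<^sub>v ((rot k)\<^sup>T *\<^sub>v u g) = u g"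
    using rot_G[OF k] ug by (intro mat_vec_cancel) auto
  then show ?thesis unfolding disc_grad_def
    using mult_minus_distrib_mat_vec[OF rot_G(1)[OF k] ugk, of "(rot k)\<^sup>T *\<^sub>v u g"] rot_G(2)[OF k] ug
    by simp
qed

definition skew_fit :: "euc set \<Rightarrow> (euc \<Rightarrow> real vec) \<Rightarrow> real \<Rightarrow> euc \<Rightarrow> real mat \<Rightarrow> bool" where
  "skew_fit R u \<epsilon> g X \<longleftrightarrow> X \<in> skew d1 \<and>
     (\<forall>k\<in>R. vnorm (rot k *\<^sub>v u (emult g k) - u g - pad X *\<^sub>v (orb k - x0)) \<le> grad_dist R u g + \<epsilon>)"

lemma skew_fit_exists:
  assumes R: "stencil R" and u: "displacement u" and g: "g \<in> G" and \<epsilon>: "0 < \<epsilon>"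
  shows "\<exists>X. skew_fit R u \<epsilon> g X"
proof -
  define w where "w = disc_grad R u g"
  have "U_rot00 d1 d2 x0 R \<noteq> {}" using zero_in_U_rot00[OF R] by blast
  moreover have "rdist R w (U_rot00 d1 d2 x0 R) < grad_dist R u g + \<epsilon>"
    unfolding grad_dist_def w_def using \<epsilon> by simp
  ultimately obtain v where v: "v \<in> U_rot00 d1 d2 x0 R"
    and v_close: "sqrt (\<Sum>h\<in>R. sqn (w h - v h)) < grad_dist R u g + \<epsilon>"
    by (rule rdist_approx)
  from v obtain X where X: "X \<in> skew d1" and v_carrier: "\<forall>k\<in>R. v k \<in> carrier_vec d"
    and vX: "\<forall>k\<in>R. rot k *\<^sub>v v k = pad X *\<^sub>v (orb k - x0)"
    unfolding mem_U_rot00_iff by blast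
  have "vnorm (rot k *\<^sub>v u (emult g k) - u g - pad X *\<^sub>v (orb k - x0)) \<le> grad_dist R u g + \<epsilon>"
    if k: "k \<in> R" for k
  proof -
    have kG: "k \<in> G" using stencilD[OF R k] .
    have "u (emult g k) \<in> carrier_vec d" "(rot k)\<^sup>T *\<^sub>v u g \<in> carrier_vec d"
      using displacementD[OF u] rot_G(2)[OF kG] g kG by auto
    then have w_carrier: "w k \<in> carrier_vec d" unfolding w_def disc_grad_def by simp
    have vk: "v k \<in> carrier_vec d" using v_carrier k by blast
    have "rot k *\<^sub>v (w k - v k) = rot k *\<^sub>v w k - rot k *\<^sub>v v k"
      by (rule mult_minus_distrib_mat_vec[OF rot_G(1)[OF kG] w_carrier vk])
    also have "\<dots> = rot k *\<^sub>v u (emult g k) - u g - pad X *\<^sub>v (orb k - x0)"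
      unfolding w_def rot_disc_grad[OF u g kG] using vX k by simp
    finally have "rot k *\<^sub>v u (emult g k) - u g - pad X *\<^sub>v (orb k - x0) = rot k *\<^sub>v (w k - v k)" ..
    moreover have "vnorm (rot k *\<^sub>v (w k - v k)) = vnorm (w k - v k)"
      using vnorm_rot[OF kG] w_carrier vk by simp
    moreover have "vnorm (w k - v k) \<le> sqrt (\<Sum>h\<in>R. sqn (w h - v h))"
      using R k unfolding stencil_def by (intro vnorm_le_sqrt_sum) auto
    ultimately show ?thesis using v_close by simp
  qed
  then show ?thesis unfolding skew_fit_def using X by blast
qed

definition fit :: "euc set \<Rightarrow> (euc \<Rightarrow> real vec) \<Rightarrow> real \<Rightarrow> euc \<Rightarrow> real mat" where
  "fit R u \<epsilon> g = (SOME X. skew_fit R u \<epsilon> g X)"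

lemma skew_fit_fit:
  "stencil R \<Longrightarrow> displacement u \<Longrightarrow> g \<in> G \<Longrightarrow> 0 < \<epsilon> \<Longrightarrow> skew_fit R u \<epsilon> g (fit R u \<epsilon> g)"
  unfolding fit_def using skew_fit_exists by (rule someI_ex)

lemma fit_skew:
  "stencil R \<Longrightarrow> displacement u \<Longrightarrow> g \<in> G \<Longrightarrow> 0 < \<epsilon> \<Longrightarrow> fit R u \<epsilon> g \<in> skew d1"
  using skew_fit_fit unfolding skew_fit_def by blast

text \<open>\<open>fit_mat R u \<epsilon> g\<close> is the fit at \<open>g\<close> in the reference frame, and \<open>fit_err R u \<epsilon> g y\<close> the
  deviation of \<open>rot_disp u\<close> at \<open>y\<close> from the infinitesimal rigid motion it predicts.\<close>

definition fit_mat :: "euc set \<Rightarrow> (euc \<Rightarrow> real vec) \<Rightarrow> real \<Rightarrow> euc \<Rightarrow> real mat" where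
  "fit_mat R u \<epsilon> g = rot g * pad (fit R u \<epsilon> g) * (rot g)\<^sup>T"

definition rot_disp :: "(euc \<Rightarrow> real vec) \<Rightarrow> euc \<Rightarrow> real vec" where
  "rot_disp u x = rot x *\<^sub>v u x"

definition fit_err :: "euc set \<Rightarrow> (euc \<Rightarrow> real vec) \<Rightarrow> real \<Rightarrow> euc \<Rightarrow> euc \<Rightarrow> real vec" where
  "fit_err R u \<epsilon> g y = rot_disp u y - rot_disp u g - fit_mat R u \<epsilon> g *\<^sub>v (orb y - orb g)"

lemma fit_mat_carrier:
  "stencil R \<Longrightarrow> displacement u \<Longrightarrow> g \<in> G \<Longrightarrow> 0 < \<epsilon> \<Longrightarrow> fit_mat R u \<epsilon> g \<in> carrier_mat d d"
  unfolding fit_mat_def using fit_skew[of R u g \<epsilon>] rot_G[of g] pad_skew_carrier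
  by (meson mult_carrier_mat)

lemma rot_disp_carrier: "displacement u \<Longrightarrow> x \<in> G \<Longrightarrow> rot_disp u x \<in> carrier_vec d"
  unfolding rot_disp_def using rot_G(1)[of x] displacementD by auto

lemma fit_err_carrier:
  assumes "stencil R" "displacement u" "g \<in> G" "y \<in> G" "0 < \<epsilon>"
  shows "fit_err R u \<epsilon> g y \<in> carrier_vec d"
  using rot_disp_carrier[of u y] rot_disp_carrier[of u g] fit_mat_carrier[of R u g \<epsilon>]
    orb_carrier[of y] orb_carrier[of g] assms
  unfolding fit_err_def by auto

lemma fit_err_self:
  assumes "stencil R" "displacement u" "g \<in> G" "0 < \<epsilon>"
  shows "fit_err R u \<epsilon> g g = 0\<^sub>v d"
  unfolding fit_err_def using rot_disp_carrier[of u g] fit_mat_carrier[of R u g \<epsilon>] orb_carrier[of g] assms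
  by (intro eq_vecI) (auto simp: mult_minus_distrib_mat_vec)

lemma fit_err_cocycle:
  assumes "stencil R" "displacement u" "0 < \<epsilon>" "g \<in> G" "c \<in> G" "y \<in> G"
  shows "fit_err R u \<epsilon> g y = fit_err R u \<epsilon> c y + fit_err R u \<epsilon> g c
    + (fit_mat R u \<epsilon> c - fit_mat R u \<epsilon> g) *\<^sub>v (orb y - orb c)"
  unfolding fit_err_def
  by (rule affine_err_cocycle[where n = d]) (use assms rot_disp_carrier orb_carrier fit_mat_carrier in auto)

lemma fit_err_emult:
  assumes R: "stencil R" and u: "displacement u" and g: "g \<in> G" and h: "h \<in> G" and \<epsilon>: "0 < \<epsilon>"
  shows "fit_err R u \<epsilon> g (emult g h)
    = rot g *\<^sub>v (rot h *\<^sub>v u (emult g h) - u g - pad (fit R u \<epsilon> g) *\<^sub>v (orb h - x0))"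
proof -
  define X where "X = pad (fit R u \<epsilon> g)"
  have X: "X \<in> carrier_mat d d" unfolding X_def using fit_skew[OF R u g \<epsilon>] pad_skew_carrier by blast
  have c: "u (emult g h) \<in> carrier_vec d" "u g \<in> carrier_vec d" "orb h - x0 \<in> carrier_vec d"
    using displacementD[OF u] g h orb_diff_carrier by auto
  note rg = rot_G[OF g] and rh = rot_G[OF h]
  have "rot_disp u (emult g h) = rot g *\<^sub>v (rot h *\<^sub>v u (emult g h))"
    unfolding rot_disp_def rot_emult using rg rh c by simp
  moreover have "fit_mat R u \<epsilon> g *\<^sub>v (orb (emult g h) - orb g) = rot g *\<^sub>v (X *\<^sub>v (orb h - x0))"
  proof -
    have "fit_mat R u \<epsilon> g *\<^sub>v (orb (emult g h) - orb g)
        = rot g *\<^sub>v (X *\<^sub>v ((rot g)\<^sup>T *\<^sub>v (rot g *\<^sub>v (orb h - x0))))"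
      unfolding fit_mat_def X_def[symmetric] orb_emult[OF g h]
      using rg X c by (intro assoc_mult_mat_vec3) auto
    also have "(rot g)\<^sup>T *\<^sub>v (rot g *\<^sub>v (orb h - x0)) = orb h - x0"
      using rg c by (intro mat_vec_cancel) auto
    finally show ?thesis .
  qed
  ultimately show ?thesis
    unfolding fit_err_def X_def[symmetric] rot_disp_def
    using rg rh c X by (simp add: mult_minus_distrib_mat_vec)
qed

lemma vnorm_fit_err_stencil_le:
  assumes R: "stencil R" and u: "displacement u" and g: "g \<in> G" and k: "k \<in> R" and \<epsilon>: "0 < \<epsilon>"
  shows "vnorm (fit_err R u \<epsilon> g (emult g k)) \<le> grad_dist R u g + \<epsilon>"
proof -
  have kG: "k \<in> G" using stencilD[OF R k] .
  have "vnorm (fit_err R u \<epsilon> g (emult g k))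
      = vnorm (rot k *\<^sub>v u (emult g k) - u g - pad (fit R u \<epsilon> g) *\<^sub>v (orb k - x0))"
    unfolding fit_err_emult[OF R u g kG \<epsilon>]
    using rot_G[OF kG] displacementD[OF u] g kG pad_skew_carrier[OF fit_skew[OF R u g \<epsilon>]]
      orb_diff_carrier[OF kG]
    by (intro vnorm_rot[OF g]) auto
  also have "\<dots> \<le> grad_dist R u g + \<epsilon>"
    using skew_fit_fit[OF R u g \<epsilon>] k unfolding skew_fit_def by auto
  finally show ?thesis .
qed

section \<open>Controlled group elements\<close>

definition bounded_on_Vaff :: "real mat \<Rightarrow> real \<Rightarrow> bool" where
  "bounded_on_Vaff M \<beta> \<longleftrightarrow> (\<forall>z\<in>Vaff. vnorm (M *\<^sub>v z) \<le> \<beta> * vnorm z)"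

lemma bounded_on_VaffD: "bounded_on_Vaff M \<beta> \<Longrightarrow> z \<in> Vaff \<Longrightarrow> vnorm (M *\<^sub>v z) \<le> \<beta> * vnorm z"
  unfolding bounded_on_Vaff_def by blast

lemma bounded_on_Vaff_mono:
  assumes "bounded_on_Vaff M \<beta>" "\<beta> \<le> \<beta>'" shows "bounded_on_Vaff M \<beta>'"
  unfolding bounded_on_Vaff_def
  using bounded_on_VaffD[OF assms(1)] mult_right_mono[OF assms(2) vnorm_nonneg] by (meson order_trans)

lemma bounded_on_Vaff_diff_commute:
  assumes "A \<in> carrier_mat d d" "B \<in> carrier_mat d d" "bounded_on_Vaff (A - B) \<beta>"
  shows "bounded_on_Vaff (B - A) \<beta>"
  unfolding bounded_on_Vaff_def
proof
  fix z assume z: "z \<in> Vaff"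
  have "(B - A) *\<^sub>v z = - ((A - B) *\<^sub>v z)"
    using assms Vaff_carrier[OF z] by (intro eq_vecI) (auto simp: minus_mult_distrib_mat_vec)
  then show "vnorm ((B - A) *\<^sub>v z) \<le> \<beta> * vnorm z" using bounded_on_VaffD[OF assms(3) z] by simp
qed

lemma bounded_on_Vaff_diff_trans:
  assumes "A \<in> carrier_mat d d" "B \<in> carrier_mat d d" "E \<in> carrier_mat d d"
    and "bounded_on_Vaff (A - B) \<beta>" "bounded_on_Vaff (B - E) \<gamma>"
  shows "bounded_on_Vaff (A - E) (\<beta> + \<gamma>)"
  unfolding bounded_on_Vaff_def
proof
  fix z assume z: "z \<in> Vaff"
  have zc: "z \<in> carrier_vec d" using Vaff_carrier[OF z] .
  have "(A - E) *\<^sub>v z = (A - B) *\<^sub>v z + (B - E) *\<^sub>v z"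
    using assms zc by (intro eq_vecI) (auto simp: minus_mult_distrib_mat_vec)
  then have "vnorm ((A - E) *\<^sub>v z) \<le> vnorm ((A - B) *\<^sub>v z) + vnorm ((B - E) *\<^sub>v z)"
    using assms zc by (simp add: vnorm_add_le)
  also have "\<dots> \<le> (\<beta> + \<gamma>) * vnorm z"
    using bounded_on_VaffD[OF assms(4) z] bounded_on_VaffD[OF assms(5) z] by (simp add: algebra_simps)
  finally show "vnorm ((A - E) *\<^sub>v z) \<le> (\<beta> + \<gamma>) * vnorm z" .
qed

definition tol_sum :: "euc set \<Rightarrow> (euc \<Rightarrow> real vec) \<Rightarrow> real \<Rightarrow> euc \<Rightarrow> euc list \<Rightarrow> real" where
  "tol_sum R u \<epsilon> g P = (\<Sum>p\<leftarrow>P. grad_dist R u (emult g p) + \<epsilon>)"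

lemma tol_sum_nonneg:
  assumes "stencil R" "0 < \<epsilon>" shows "0 \<le> tol_sum R u \<epsilon> g P"
proof -
  have "0 \<le> grad_dist R u x + \<epsilon>" for x using grad_dist_nonneg[OF assms(1), of u x] assms(2) by simp
  then show ?thesis unfolding tol_sum_def by (intro sum_list_nonneg) (simp only: set_map, blast)
qed

lemma tol_sum_append: "tol_sum R u \<epsilon> g (P @ Q) = tol_sum R u \<epsilon> g P + tol_sum R u \<epsilon> g Q"
  unfolding tol_sum_def by simp

lemma tol_sum_map_emult:
  assumes "set P \<subseteq> G" "g \<in> G" "h \<in> G"
  shows "tol_sum R u \<epsilon> g (map (emult h) P) = tol_sum R u \<epsilon> (emult g h) P"
  unfolding tol_sum_def map_map comp_def
  by (rule arg_cong[where f = sum_list], rule map_cong[OF refl]) (use assms in \<open>auto simp: emult_assoc_G\<close>)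

text \<open>The key notion of the proof: the fits at \<open>g\<close> and \<open>g h\<close> are close to each other, and the fit at
  \<open>g\<close> predicts \<open>rot_disp u\<close> at \<open>g h\<close> well, with errors controlled, uniformly in \<open>u\<close>, \<open>\<epsilon>\<close> and \<open>g\<close>, by
  the local quantities \<open>grad_dist R u\<close> at finitely many fixed translates \<open>g p\<close>.\<close>

definition controlled :: "euc set \<Rightarrow> euc \<Rightarrow> bool" where
  "controlled R h \<longleftrightarrow> (\<exists>K\<ge>0. \<exists>P. set P \<subseteq> G \<and> (\<forall>u \<epsilon>. displacement u \<longrightarrow> 0 < \<epsilon> \<longrightarrow> (\<forall>g\<in>G.
      bounded_on_Vaff (fit_mat R u \<epsilon> (emult g h) - fit_mat R u \<epsilon> g) (K * tol_sum R u \<epsilon> g P)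
      \<and> vnorm (fit_err R u \<epsilon> g (emult g h)) \<le> K * tol_sum R u \<epsilon> g P)))"

lemma controlled_eid:
  assumes R: "stencil R" shows "controlled R (eid d)"
  unfolding controlled_def
proof (intro exI[of _ 0] exI[of _ "[]"] conjI allI impI ballI)
  fix u and \<epsilon> :: real and g assume u: "displacement u" and \<epsilon>: "0 < \<epsilon>" and g: "g \<in> G"
  have A: "fit_mat R u \<epsilon> g \<in> carrier_mat d d" using fit_mat_carrier[OF R u g \<epsilon>] .
  have "(fit_mat R u \<epsilon> g - fit_mat R u \<epsilon> g) *\<^sub>v z = 0\<^sub>v d" if "z \<in> Vaff" for z
    using A Vaff_carrier[OF that] by (intro eq_vecI) (auto simp: minus_mult_distrib_mat_vec)
  then show "bounded_on_Vaff (fit_mat R u \<epsilon> (emult g (eid d)) - fit_mat R u \<epsilon> g) (0 * tol_sum R u \<epsilon> g [])"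
    unfolding bounded_on_Vaff_def using g by simp
  show "vnorm (fit_err R u \<epsilon> g (emult g (eid d))) \<le> 0 * tol_sum R u \<epsilon> g []"
    using fit_err_self[OF R u g \<epsilon>] g by simp
qed auto

lemma vnorm_orb_emult_diff:
  assumes "g \<in> G" "h \<in> G" shows "vnorm (orb (emult g h) - orb g) = vnorm (orb h - x0)"
  unfolding orb_emult[OF assms] using vnorm_rot[OF assms(1) orb_diff_carrier[OF assms(2)]] .

lemma bounded_on_Vaff_if_bounded_on_orbit:
  assumes sp: "spans_Vaff R \<Lambda>" and R: "stencil R" and g: "g \<in> G" and M: "M \<in> carrier_mat d d"
    and "0 \<le> \<beta>" and bound: "\<And>k. k \<in> R \<Longrightarrow> vnorm (M *\<^sub>v (orb (emult g k) - orb g)) \<le> \<beta>"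
  shows "bounded_on_Vaff M (\<Lambda> * \<beta>)"
  unfolding bounded_on_Vaff_def
proof
  fix z assume z: "z \<in> Vaff"
  \<comment> \<open>Pull \<open>z\<close> back to the reference frame, where the orbit directions \<open>orb k - x0\<close> span.\<close>
  define L where "L = M * rot g"
  define z' where "z' = (rot g)\<^sup>T *\<^sub>v z"
  have L: "L \<in> carrier_mat d d" unfolding L_def using M rot_G[OF g] by auto
  have z': "z' \<in> Vaff" unfolding z'_def using rot_transpose_Vaff[OF g z] .
  have L_orb: "L *\<^sub>v (orb k - x0) = M *\<^sub>v (orb (emult g k) - orb g)" if "k \<in> G" for k
    unfolding L_def orb_emult[OF g that] using M rot_G[OF g] orb_diff_carrier[OF that]
    by (intro assoc_mult_mat_vec) auto
  have "L *\<^sub>v z' = M *\<^sub>v (rot g *\<^sub>v z')"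
    unfolding L_def using M rot_G[OF g] Vaff_carrier[OF z'] by (intro assoc_mult_mat_vec) auto
  also have "rot g *\<^sub>v z' = z"
    unfolding z'_def using rot_G[OF g] Vaff_carrier[OF z] by (intro mat_vec_cancel) auto
  finally have "M *\<^sub>v z = L *\<^sub>v z'" ..
  moreover have "vnorm (L *\<^sub>v z') \<le> \<Lambda> * \<beta> * vnorm z'"
    using R bound L_orb stencilD[OF R] \<open>0 \<le> \<beta>\<close> unfolding stencil_def
    by (intro vnorm_mult_Vaff_le[OF sp _ _ L _ _ z']) auto
  moreover have "vnorm z' = vnorm z"
    unfolding z'_def using vnorm_rot_transpose[OF g Vaff_carrier[OF z]] .
  ultimately show "vnorm (M *\<^sub>v z) \<le> \<Lambda> * \<beta> * vnorm z" by simp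
qed

lemma controlled_generator:
  assumes R: "stencil R" and r: "r \<in> R" and R'': "stencil R''" "R'' \<subseteq> R"
    and rR'': "\<And>k. k \<in> R'' \<Longrightarrow> emult r k \<in> R" and sp: "spans_Vaff R'' \<Lambda>"
  shows "controlled R r"
  unfolding controlled_def
proof (intro exI[of _ "2 * \<Lambda> + 1"] exI[of _ "[eid d, r]"] conjI allI impI ballI)
  have rG: "r \<in> G" using stencilD[OF R r] .
  have \<Lambda>: "0 \<le> \<Lambda>" using sp unfolding spans_Vaff_def by auto
  then show "0 \<le> 2 * \<Lambda> + 1" by simp
  show "set [eid d, r] \<subseteq> G" using rG by auto
  fix u and \<epsilon> :: real and g assume u: "displacement u" and \<epsilon>: "0 < \<epsilon>" and g: "g \<in> G"
  define g' where "g' = emult g r"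
  have g': "g' \<in> G" unfolding g'_def using g rG by simp
  define a where "a = grad_dist R u g + \<epsilon>"
  define b where "b = grad_dist R u g' + \<epsilon>"
  have ab: "0 \<le> a" "0 \<le> b" unfolding a_def b_def using grad_dist_nonneg[OF R] \<epsilon> by (simp_all add: add_nonneg_nonneg)
  have tol: "tol_sum R u \<epsilon> g [eid d, r] = a + b" unfolding tol_sum_def a_def b_def g'_def using g by simp
  have err_g': "vnorm (fit_err R u \<epsilon> g g') \<le> a"
    unfolding g'_def a_def by (rule vnorm_fit_err_stencil_le[OF R u g r \<epsilon>])
  \<comment> \<open>Compare the fits at \<open>g\<close> and \<open>g'\<close> on the points \<open>g' k = g (r k)\<close>, \<open>k \<in> R''\<close>, seen by both stencils.\<close>
  have "vnorm ((fit_mat R u \<epsilon> g' - fit_mat R u \<epsilon> g) *\<^sub>v (orb (emult g' k) - orb g')) \<le> a + b + a"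
    if k: "k \<in> R''" for k
  proof -
    have kG: "k \<in> G" using stencilD[OF R''(1) k] .
    define y where "y = emult g' k"
    have y: "y \<in> G" unfolding y_def using g' kG by simp
    have "vnorm (fit_err R u \<epsilon> g y) \<le> a"
      using vnorm_fit_err_stencil_le[OF R u g rR''[OF k] \<epsilon>] emult_assoc_G[OF g rG kG]
      unfolding y_def g'_def a_def by simp
    moreover have "vnorm (fit_err R u \<epsilon> g' y) \<le> b"
      using vnorm_fit_err_stencil_le[OF R u g' _ \<epsilon>] k R'' unfolding y_def b_def by blast
    moreover have "vnorm ((fit_mat R u \<epsilon> g' - fit_mat R u \<epsilon> g) *\<^sub>v (orb y - orb g'))
        \<le> vnorm (fit_err R u \<epsilon> g y) + vnorm (fit_err R u \<epsilon> g' y) + vnorm (fit_err R u \<epsilon> g g')"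
    proof (rule vnorm_summand_le(2)[OF fit_err_cocycle[OF R u \<epsilon> g g' y]])
      show "fit_err R u \<epsilon> g y \<in> carrier_vec d" "fit_err R u \<epsilon> g' y \<in> carrier_vec d"
        "fit_err R u \<epsilon> g g' \<in> carrier_vec d"
        using fit_err_carrier[OF R u] g g' y \<epsilon> by auto
      show "(fit_mat R u \<epsilon> g' - fit_mat R u \<epsilon> g) *\<^sub>v (orb y - orb g') \<in> carrier_vec d"
        using mult_mat_vec_carrier[OF minus_carrier_mat[OF fit_mat_carrier[OF R u g \<epsilon>]]]
          orb_carrier[OF y] orb_carrier[OF g'] by simp
    qed
    ultimately show ?thesis using err_g' unfolding y_def by simp
  qed
  then have "bounded_on_Vaff (fit_mat R u \<epsilon> g' - fit_mat R u \<epsilon> g) (\<Lambda> * (a + b + a))"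
    using ab by (intro bounded_on_Vaff_if_bounded_on_orbit[OF sp R''(1) g'
        minus_carrier_mat[OF fit_mat_carrier[OF R u g \<epsilon>]]]) auto
  moreover have "\<Lambda> * (a + b + a) \<le> (2 * \<Lambda> + 1) * (a + b)"
    using \<Lambda> ab by (simp add: algebra_simps mult_left_mono)
  ultimately show "bounded_on_Vaff (fit_mat R u \<epsilon> (emult g r) - fit_mat R u \<epsilon> g)
      ((2 * \<Lambda> + 1) * tol_sum R u \<epsilon> g [eid d, r])"
    unfolding tol g'_def by (rule bounded_on_Vaff_mono)
  show "vnorm (fit_err R u \<epsilon> g (emult g r)) \<le> (2 * \<Lambda> + 1) * tol_sum R u \<epsilon> g [eid d, r]"
    using err_g' ab mult_nonneg_nonneg[OF \<Lambda> ab(1)] mult_nonneg_nonneg[OF \<Lambda> ab(2)]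
    unfolding tol g'_def by (simp add: algebra_simps)
qed

lemma controlled_emult:
  assumes R: "stencil R" and h1: "h1 \<in> G" and h2: "h2 \<in> G"
    and "controlled R h1" "controlled R h2"
  shows "controlled R (emult h1 h2)"
proof -
  obtain K1 P1 where K1: "0 \<le> K1" "set P1 \<subseteq> G" and Q1: "\<And>u \<epsilon> g. displacement u \<Longrightarrow> 0 < \<epsilon> \<Longrightarrow> g \<in> G \<Longrightarrow>
      bounded_on_Vaff (fit_mat R u \<epsilon> (emult g h1) - fit_mat R u \<epsilon> g) (K1 * tol_sum R u \<epsilon> g P1)
      \<and> vnorm (fit_err R u \<epsilon> g (emult g h1)) \<le> K1 * tol_sum R u \<epsilon> g P1"
    using \<open>controlled R h1\<close> unfolding controlled_def by blast
  obtain K2 P2 where K2: "0 \<le> K2" "set P2 \<subseteq> G" and Q2: "\<And>u \<epsilon> g. displacement u \<Longrightarrow> 0 < \<epsilon> \<Longrightarrow> g \<in> G \<Longrightarrow>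
      bounded_on_Vaff (fit_mat R u \<epsilon> (emult g h2) - fit_mat R u \<epsilon> g) (K2 * tol_sum R u \<epsilon> g P2)
      \<and> vnorm (fit_err R u \<epsilon> g (emult g h2)) \<le> K2 * tol_sum R u \<epsilon> g P2"
    using \<open>controlled R h2\<close> unfolding controlled_def by blast
  define \<rho> where "\<rho> = vnorm (orb h2 - x0)"
  have \<rho>: "0 \<le> \<rho>" unfolding \<rho>_def by simp
  show ?thesis unfolding controlled_def
  proof (intro exI[of _ "K1 * (1 + \<rho>) + K2"] exI[of _ "P1 @ map (emult h1) P2"] conjI allI impI ballI)
    show "0 \<le> K1 * (1 + \<rho>) + K2" using K1 K2 \<rho> by simp
    show "set (P1 @ map (emult h1) P2) \<subseteq> G" using K1 K2 h1 by auto
    fix u and \<epsilon> :: real and g assume u: "displacement u" and \<epsilon>: "0 < \<epsilon>" and g: "g \<in> G"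
    define c where "c = emult g h1"
    have c: "c \<in> G" unfolding c_def using g h1 by simp
    have y: "emult g (emult h1 h2) = emult c h2" unfolding c_def using emult_assoc_G g h1 h2 by simp
    have y_G: "emult c h2 \<in> G" using c h2 by simp
    define s1 where "s1 = tol_sum R u \<epsilon> g P1"
    define s2 where "s2 = tol_sum R u \<epsilon> c P2"
    have s: "0 \<le> s1" "0 \<le> s2" unfolding s1_def s2_def using tol_sum_nonneg[OF R \<epsilon>] by auto
    have tol: "tol_sum R u \<epsilon> g (P1 @ map (emult h1) P2) = s1 + s2"
      unfolding tol_sum_append s1_def s2_def c_def using tol_sum_map_emult K2(2) g h1 by simp
    have D1: "bounded_on_Vaff (fit_mat R u \<epsilon> c - fit_mat R u \<epsilon> g) (K1 * s1)"
      and E1: "vnorm (fit_err R u \<epsilon> g c) \<le> K1 * s1"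
      using Q1[OF u \<epsilon> g] unfolding c_def s1_def by blast+
    have D2: "bounded_on_Vaff (fit_mat R u \<epsilon> (emult c h2) - fit_mat R u \<epsilon> c) (K2 * s2)"
      and E2: "vnorm (fit_err R u \<epsilon> c (emult c h2)) \<le> K2 * s2"
      using Q2[OF u \<epsilon> c] unfolding s2_def by blast+
    have bound: "K2 * s2 + K1 * s1 + K1 * s1 * \<rho> \<le> (K1 * (1 + \<rho>) + K2) * (s1 + s2)"
      using mult_nonneg_nonneg[OF mult_nonneg_nonneg[OF K1(1) \<rho>] s(2)] mult_nonneg_nonneg[OF K1(1) s(2)]
        mult_nonneg_nonneg[OF K2(1) s(1)]
      by (simp add: algebra_simps)
    have "bounded_on_Vaff (fit_mat R u \<epsilon> (emult c h2) - fit_mat R u \<epsilon> g) (K2 * s2 + K1 * s1)"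
      using fit_mat_carrier[OF R u _ \<epsilon>] c g y_G by (intro bounded_on_Vaff_diff_trans[OF _ _ _ D2 D1]) auto
    then show "bounded_on_Vaff (fit_mat R u \<epsilon> (emult g (emult h1 h2)) - fit_mat R u \<epsilon> g)
        ((K1 * (1 + \<rho>) + K2) * tol_sum R u \<epsilon> g (P1 @ map (emult h1) P2))"
      unfolding y tol
      by (rule bounded_on_Vaff_mono) (use bound mult_nonneg_nonneg[OF mult_nonneg_nonneg[OF K1(1) s(1)] \<rho>] in linarith)
    have orb_y: "orb (emult c h2) - orb c \<in> Vaff" "vnorm (orb (emult c h2) - orb c) = \<rho>"
      using orb_diff_in_Vaff[OF y_G c] vnorm_orb_emult_diff[OF c h2] unfolding \<rho>_def by auto
    have "vnorm (fit_err R u \<epsilon> g (emult c h2)) \<le> vnorm (fit_err R u \<epsilon> c (emult c h2)) + vnorm (fit_err R u \<epsilon> g c)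
        + vnorm ((fit_mat R u \<epsilon> c - fit_mat R u \<epsilon> g) *\<^sub>v (orb (emult c h2) - orb c))"
      unfolding fit_err_cocycle[OF R u \<epsilon> g c y_G]
      using fit_err_carrier[OF R u c y_G \<epsilon>] fit_err_carrier[OF R u g c \<epsilon>]
        mult_mat_vec_carrier[OF minus_carrier_mat[OF fit_mat_carrier[OF R u g \<epsilon>]] Vaff_carrier[OF orb_y(1)]]
      by (rule vnorm_add3_le)
    also have "\<dots> \<le> K2 * s2 + K1 * s1 + K1 * s1 * \<rho>"
      using E1 E2 bounded_on_VaffD[OF D1 orb_y(1)] unfolding orb_y(2) by simp
    finally show "vnorm (fit_err R u \<epsilon> g (emult g (emult h1 h2)))
        \<le> (K1 * (1 + \<rho>) + K2) * tol_sum R u \<epsilon> g (P1 @ map (emult h1) P2)"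
      unfolding y tol using bound by linarith
  qed
qed

lemma controlled_einv:
  assumes R: "stencil R" and h: "h \<in> G" and "controlled R h"
  shows "controlled R (einv h)"
proof -
  obtain K P where K: "0 \<le> K" "set P \<subseteq> G" and Q: "\<And>u \<epsilon> g. displacement u \<Longrightarrow> 0 < \<epsilon> \<Longrightarrow> g \<in> G \<Longrightarrow>
      bounded_on_Vaff (fit_mat R u \<epsilon> (emult g h) - fit_mat R u \<epsilon> g) (K * tol_sum R u \<epsilon> g P)
      \<and> vnorm (fit_err R u \<epsilon> g (emult g h)) \<le> K * tol_sum R u \<epsilon> g P"
    using \<open>controlled R h\<close> unfolding controlled_def by blast
  define \<rho> where "\<rho> = vnorm (orb h - x0)"
  have \<rho>: "0 \<le> \<rho>" unfolding \<rho>_def by simp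
  show ?thesis unfolding controlled_def
  proof (intro exI[of _ "K * (1 + \<rho>)"] exI[of _ "map (emult (einv h)) P"] conjI allI impI ballI)
    show "0 \<le> K * (1 + \<rho>)" using K \<rho> by simp
    show "set (map (emult (einv h)) P) \<subseteq> G" using K h by auto
    fix u and \<epsilon> :: real and g assume u: "displacement u" and \<epsilon>: "0 < \<epsilon>" and g: "g \<in> G"
    define g' where "g' = emult g (einv h)"
    have g': "g' \<in> G" unfolding g'_def using g h by simp
    have g'h: "emult g' h = g" unfolding g'_def using emult_assoc_G[of g "einv h" h] g h by simp
    define s where "s = tol_sum R u \<epsilon> g' P"
    have s: "0 \<le> s" unfolding s_def using tol_sum_nonneg[OF R \<epsilon>] by auto
    have tol: "tol_sum R u \<epsilon> g (map (emult (einv h)) P) = s"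
      unfolding s_def g'_def using tol_sum_map_emult K(2) g h by simp
    have D: "bounded_on_Vaff (fit_mat R u \<epsilon> g - fit_mat R u \<epsilon> g') (K * s)"
      and E: "vnorm (fit_err R u \<epsilon> g' g) \<le> K * s"
      using Q[OF u \<epsilon> g'] unfolding g'h s_def by blast+
    have D': "bounded_on_Vaff (fit_mat R u \<epsilon> g' - fit_mat R u \<epsilon> g) (K * s)"
      using fit_mat_carrier[OF R u _ \<epsilon>] g g' by (intro bounded_on_Vaff_diff_commute[OF _ _ D]) auto
    then show "bounded_on_Vaff (fit_mat R u \<epsilon> (emult g (einv h)) - fit_mat R u \<epsilon> g)
        (K * (1 + \<rho>) * tol_sum R u \<epsilon> g (map (emult (einv h)) P))"
      unfolding g'_def[symmetric] tol
      by (rule bounded_on_Vaff_mono) (use K \<rho> s in \<open>simp add: algebra_simps\<close>)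
    have orb_g: "orb g - orb g' \<in> Vaff" "vnorm (orb g - orb g') = \<rho>"
      using orb_diff_in_Vaff[OF g g'] vnorm_orb_emult_diff[OF g' h] unfolding g'h \<rho>_def by auto
    \<comment> \<open>Since \<open>fit_err g g = 0\<close>, the cocycle identity expresses \<open>fit_err g g'\<close> through \<open>fit_err g' g\<close>.\<close>
    have "vnorm (fit_err R u \<epsilon> g g') \<le> vnorm (fit_err R u \<epsilon> g g) + vnorm (fit_err R u \<epsilon> g' g)
        + vnorm ((fit_mat R u \<epsilon> g' - fit_mat R u \<epsilon> g) *\<^sub>v (orb g - orb g'))"
      using fit_err_carrier[OF R u g g \<epsilon>] fit_err_carrier[OF R u g' g \<epsilon>] fit_err_carrier[OF R u g g' \<epsilon>]
        mult_mat_vec_carrier[OF minus_carrier_mat[OF fit_mat_carrier[OF R u g \<epsilon>]] Vaff_carrier[OF orb_g(1)]]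
      by (intro vnorm_summand_le(1)[OF fit_err_cocycle[OF R u \<epsilon> g g' g]]) auto
    also have "\<dots> \<le> K * s + K * s * \<rho>"
      using E bounded_on_VaffD[OF D' orb_g(1)] fit_err_self[OF R u g \<epsilon>] unfolding orb_g(2) by simp
    finally show "vnorm (fit_err R u \<epsilon> g (emult g (einv h)))
        \<le> K * (1 + \<rho>) * tol_sum R u \<epsilon> g (map (emult (einv h)) P)"
      unfolding g'_def[symmetric] tol by (simp add: algebra_simps)
  qed
qed

lemma controlled_gen_E:
  assumes R: "stencil R" and R': "R' \<subseteq> G" "gen_E d R' = G"
    and generators: "\<And>r. r \<in> R' \<Longrightarrow> controlled R r" and h: "h \<in> G"
  shows "controlled R h"
proof -
  have "h \<in> gen_E d R' \<Longrightarrow> controlled R h" for h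
  proof (induction rule: gen_E.induct)
    case gen_id
    then show ?case using controlled_eid[OF R] .
  next
    case (gen_base g)
    then show ?case using generators by blast
  next
    case (gen_mult g h)
    then show ?case using controlled_emult[OF R] R'(2) by blast
  next
    case (gen_inv g)
    then show ?case using controlled_einv[OF R] R'(2) by blast
  qed
  then show ?thesis using h R'(2) by blast
qed

section \<open>Comparing the local distances\<close>

lemma property2D:
  assumes "property2 d G x0 R"
  shows "stencil R" "eid d \<in> R" "\<And>h. h \<in> G \<Longrightarrow> controlled R h"
proof -
  obtain R' R'' where R: "finite R" "R \<subseteq> G" and R': "eid d \<in> R'" "R' \<subseteq> G" "gen_E d R' = G"
    and P1: "property1 d G x0 R''" and products: "{emult g h | g h. g \<in> R' \<and> h \<in> R''} \<subseteq> R"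
    using assms unfolding property2_def by blast
  have R'': "stencil R''" "eid d \<in> R''" using P1 unfolding property1_def stencil_def by auto
  have prod: "g \<in> R' \<Longrightarrow> h \<in> R'' \<Longrightarrow> emult g h \<in> R" for g h using products by blast
  show R_st: "stencil R" unfolding stencil_def using R by auto
  show "eid d \<in> R" using prod[OF R'(1) R''(2)] by simp
  have R''_R: "R'' \<subseteq> R" using prod[OF R'(1)] stencilD[OF R''(1)] by fastforce
  obtain \<Lambda> where sp: "spans_Vaff R'' \<Lambda>" using property1_spans_Vaff[OF P1] by blast
  have "controlled R r" if r: "r \<in> R'" for r
  proof (rule controlled_generator[OF R_st _ R''(1) R''_R _ sp])
    show "r \<in> R" using prod[OF r R''(2)] r R'(2) by auto
    show "\<And>k. k \<in> R'' \<Longrightarrow> emult r k \<in> R" using prod[OF r] by blast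
  qed
  then show "\<And>h. h \<in> G \<Longrightarrow> controlled R h" using controlled_gen_E[OF R_st R'(2,3)] by blast
qed

lemma controlled_uniform:
  assumes R: "stencil R" and all: "\<And>h. h \<in> G \<Longrightarrow> controlled R h" and H: "finite H" "H \<subseteq> G"
  shows "\<exists>K\<ge>0. \<exists>P. set P \<subseteq> G \<and> (\<forall>u \<epsilon>. displacement u \<longrightarrow> 0 < \<epsilon> \<longrightarrow> (\<forall>g\<in>G. \<forall>h\<in>H.
      vnorm (fit_err R u \<epsilon> g (emult g h)) \<le> K * tol_sum R u \<epsilon> g P))"
  using H
proof (induction H rule: finite_induct)
  case empty
  then show ?case by (intro exI[of _ 0] conjI exI[of _ "[]"]) auto
next
  case (insert h H)
  obtain K1 P1 where K1: "0 \<le> K1" "set P1 \<subseteq> G" and B1: "\<And>u \<epsilon> g h'. displacement u \<Longrightarrow> 0 < \<epsilon> \<Longrightarrow>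
      g \<in> G \<Longrightarrow> h' \<in> H \<Longrightarrow> vnorm (fit_err R u \<epsilon> g (emult g h')) \<le> K1 * tol_sum R u \<epsilon> g P1"
    using insert by blast
  obtain K2 P2 where K2: "0 \<le> K2" "set P2 \<subseteq> G" and B2: "\<And>u \<epsilon> g. displacement u \<Longrightarrow> 0 < \<epsilon> \<Longrightarrow>
      g \<in> G \<Longrightarrow> vnorm (fit_err R u \<epsilon> g (emult g h)) \<le> K2 * tol_sum R u \<epsilon> g P2"
    using all[of h] insert.prems unfolding controlled_def by blast
  show ?case
  proof (intro exI[of _ "K1 + K2"] exI[of _ "P1 @ P2"] conjI allI impI ballI)
    show "0 \<le> K1 + K2" "set (P1 @ P2) \<subseteq> G" using K1 K2 by auto
    fix u and \<epsilon> :: real and g h' assume u: "displacement u" and \<epsilon>: "0 < \<epsilon>" and g: "g \<in> G"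
      and h': "h' \<in> insert h H"
    have s: "0 \<le> tol_sum R u \<epsilon> g P1" "0 \<le> tol_sum R u \<epsilon> g P2" using tol_sum_nonneg[OF R \<epsilon>] by auto
    have "K1 * tol_sum R u \<epsilon> g P1 \<le> (K1 + K2) * tol_sum R u \<epsilon> g (P1 @ P2)"
      "K2 * tol_sum R u \<epsilon> g P2 \<le> (K1 + K2) * tol_sum R u \<epsilon> g (P1 @ P2)"
      unfolding tol_sum_append using K1 K2 s by (simp_all add: algebra_simps)
    then show "vnorm (fit_err R u \<epsilon> g (emult g h')) \<le> (K1 + K2) * tol_sum R u \<epsilon> g (P1 @ P2)"
      using h' B1[OF u \<epsilon> g] B2[OF u \<epsilon> g] by (cases "h' = h") fastforce+
  qed
qed

lemma iso_dist_le_fit_err: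
  assumes R: "stencil R" and H: "stencil H" and u: "displacement u" and g: "g \<in> G" and \<epsilon>: "0 < \<epsilon>"
  shows "iso_dist H u g \<le> sqrt (\<Sum>h\<in>H. (vnorm (fit_err R u \<epsilon> g (emult g h)))\<^sup>2)"
proof -
  \<comment> \<open>The fit at \<open>g\<close> is itself an infinitesimal isometry on the stencil \<open>H\<close>.\<close>
  define X where "X = fit R u \<epsilon> g"
  have X: "X \<in> skew d1" unfolding X_def using fit_skew[OF R u g \<epsilon>] .
  have pX: "pad X \<in> carrier_mat d d" using pad_skew_carrier[OF X] .
  have ug: "u g \<in> carrier_vec d" using displacementD[OF u g] .
  define v1 where "v1 h = (rot h)\<^sup>T *\<^sub>v u g" for h
  define v2 where "v2 h = (rot h)\<^sup>T *\<^sub>v (pad X *\<^sub>v (orb h - x0))" for h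
  have v_carrier: "v1 h \<in> carrier_vec d" "v2 h \<in> carrier_vec d" if "h \<in> H" for h
    unfolding v1_def v2_def using rot_G[OF stencilD[OF H that]] ug pX orb_diff_carrier[OF stencilD[OF H that]]
    by auto
  have rot_v: "rot h *\<^sub>v v1 h = u g" "rot h *\<^sub>v v2 h = pad X *\<^sub>v (orb h - x0)" if "h \<in> H" for h
    unfolding v1_def v2_def using rot_G[OF stencilD[OF H that]] ug pX orb_diff_carrier[OF stencilD[OF H that]]
    by (auto intro: mat_vec_cancel)
  have "(\<lambda>h. v1 h + v2 h) \<in> U_iso00 d1 d2 x0 H"
  proof -
    have "v1 \<in> U_trans (d1 + d2) H" unfolding mem_U_trans_iff using v_carrier rot_v ug by blast
    moreover have "v2 \<in> U_rot00 d1 d2 x0 H" unfolding mem_U_rot00_iff using v_carrier rot_v X by blast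
    ultimately show ?thesis unfolding U_iso00_def by blast
  qed
  then have "iso_dist H u g \<le> sqrt (\<Sum>h\<in>H. sqn (u (emult g h) - (v1 h + v2 h)))"
    unfolding iso_dist_def by (rule rdist_le)
  also have "(\<Sum>h\<in>H. sqn (u (emult g h) - (v1 h + v2 h))) = (\<Sum>h\<in>H. (vnorm (fit_err R u \<epsilon> g (emult g h)))\<^sup>2)"
  proof (intro sum.cong refl)
    fix h assume h: "h \<in> H"
    have hG: "h \<in> G" using stencilD[OF H h] .
    have ugh: "u (emult g h) \<in> carrier_vec d" using displacementD[OF u] g hG by simp
    have res: "rot h *\<^sub>v u (emult g h) - u g - pad X *\<^sub>v (orb h - x0) \<in> carrier_vec d"
      using rot_G[OF hG] ugh ug pX orb_diff_carrier[OF hG] by simp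
    have "rot h *\<^sub>v (u (emult g h) - (v1 h + v2 h)) = rot h *\<^sub>v u (emult g h) - rot h *\<^sub>v v1 h - rot h *\<^sub>v v2 h"
    proof -
      have "u (emult g h) - (v1 h + v2 h) = u (emult g h) - v1 h - v2 h"
        using ugh v_carrier[OF h] by (intro eq_vecI) auto
      then show ?thesis using rot_G[OF hG] ugh v_carrier[OF h] by (simp add: mult_minus_distrib_mat_vec)
    qed
    then have "vnorm (u (emult g h) - (v1 h + v2 h)) = vnorm (rot h *\<^sub>v u (emult g h) - u g - pad X *\<^sub>v (orb h - x0))"
      using vnorm_rot[OF hG, of "u (emult g h) - (v1 h + v2 h)"] ugh v_carrier[OF h] rot_v[OF h] by simp
    also have "\<dots> = vnorm (fit_err R u \<epsilon> g (emult g h))"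
      unfolding fit_err_emult[OF R u g hG \<epsilon>] X_def[symmetric] using vnorm_rot[OF g res] ..
    finally show "sqn (u (emult g h) - (v1 h + v2 h)) = (vnorm (fit_err R u \<epsilon> g (emult g h)))\<^sup>2"
      unfolding sqn_eq_vnorm_sq by simp
  qed
  finally show ?thesis .
qed

lemma disc_grad_minus_U_rot00:
  assumes R: "stencil R" and e: "eid d \<in> R" and u: "displacement u" and g: "g \<in> G"
    and v1: "v1 \<in> U_trans (d1 + d2) R" and v2: "v2 \<in> U_rot00 d1 d2 x0 R" and k: "k \<in> R"
  shows "disc_grad R u g k - v2 k
    = (u (emult g k) - (v1 k + v2 k)) - (rot k)\<^sup>T *\<^sub>v (u g - (v1 (eid d) + v2 (eid d)))"
proof -
  have kG: "k \<in> G" using stencilD[OF R k] .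
  obtain a where a: "a \<in> carrier_vec d" and v1_carrier: "\<forall>h\<in>R. v1 h \<in> carrier_vec d"
    and v1a: "\<forall>h\<in>R. rot h *\<^sub>v v1 h = a"
    using v1 unfolding mem_U_trans_iff by blast
  obtain X where X: "X \<in> skew d1" and v2_carrier: "\<forall>h\<in>R. v2 h \<in> carrier_vec d"
    and v2X: "\<forall>h\<in>R. rot h *\<^sub>v v2 h = pad X *\<^sub>v (orb h - x0)"
    using v2 unfolding mem_U_rot00_iff by blast
  have "rot (eid d) *\<^sub>v v1 (eid d) = a" using v1a e by blast
  then have "v1 (eid d) = a" using v1_carrier e by (simp add: rot_eid)
  moreover have "v2 (eid d) = 0\<^sub>v d"
  proof -
    have "x0 - x0 = 0\<^sub>v d" using x0_dim by (intro eq_vecI) auto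
    then have "pad X *\<^sub>v (orb (eid d) - x0) = 0\<^sub>v d"
      using mult_mat_vec_zero[OF pad_skew_carrier[OF X]] by simp
    moreover have "rot (eid d) *\<^sub>v v2 (eid d) = pad X *\<^sub>v (orb (eid d) - x0)" using v2X e by blast
    ultimately show ?thesis using v2_carrier e by (simp add: rot_eid)
  qed
  moreover have "v1 k = (rot k)\<^sup>T *\<^sub>v a"
    using mat_vec_cancel[OF rot_G(2,1)[OF kG] rot_G(4)[OF kG], of "v1 k"] v1a v1_carrier k by simp
  moreover have "(rot k)\<^sup>T *\<^sub>v (u g - a) = (rot k)\<^sup>T *\<^sub>v u g - (rot k)\<^sup>T *\<^sub>v a"
    using rot_G[OF kG] displacementD[OF u g] a by (intro mult_minus_distrib_mat_vec) auto
  ultimately show ?thesis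
    unfolding disc_grad_def
    using displacementD[OF u] g kG rot_G[OF kG] a v2_carrier k by (intro eq_vecI) auto
qed

lemma grad_dist_le_dist_to_U_iso00:
  assumes R: "stencil R" and e: "eid d \<in> R" and u: "displacement u" and g: "g \<in> G"
    and w: "w \<in> U_iso00 d1 d2 x0 R"
  shows "grad_dist R u g \<le> sqrt (2 * (1 + real (card R))) * sqrt (\<Sum>h\<in>R. sqn (u (emult g h) - w h))"
proof -
  obtain v1 v2 where w_eq: "w = (\<lambda>h. v1 h + v2 h)" and v1: "v1 \<in> U_trans (d1 + d2) R"
    and v2: "v2 \<in> U_rot00 d1 d2 x0 R" using w unfolding U_iso00_def by blast
  define \<delta> where "\<delta> k = u (emult g k) - w k" for k
  define Q where "Q = (\<Sum>k\<in>R. (vnorm (\<delta> k))\<^sup>2)"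
  have fin: "finite R" using R unfolding stencil_def by blast
  have \<delta>_carrier: "\<delta> k \<in> carrier_vec d" if "k \<in> R" for k
    using displacementD[OF u] g stencilD[OF R that] v1 v2 that
    unfolding \<delta>_def w_eq mem_U_trans_iff mem_U_rot00_iff by auto
  have "sqn (disc_grad R u g k - v2 k) \<le> 2 * (vnorm (\<delta> k))\<^sup>2 + 2 * (vnorm (\<delta> (eid d)))\<^sup>2"
    if k: "k \<in> R" for k
  proof -
    have kG: "k \<in> G" using stencilD[OF R k] .
    have "disc_grad R u g k - v2 k = \<delta> k - (rot k)\<^sup>T *\<^sub>v \<delta> (eid d)"
      using disc_grad_minus_U_rot00[OF R e u g v1 v2 k] g unfolding \<delta>_def w_eq by simp
    then have "vnorm (disc_grad R u g k - v2 k) \<le> vnorm (\<delta> k) + vnorm ((rot k)\<^sup>T *\<^sub>v \<delta> (eid d))"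
      using \<delta>_carrier[OF k] \<delta>_carrier[OF e] rot_G[OF kG] by (simp add: vnorm_diff_le)
    also have "vnorm ((rot k)\<^sup>T *\<^sub>v \<delta> (eid d)) = vnorm (\<delta> (eid d))"
      using vnorm_rot_transpose[OF kG \<delta>_carrier[OF e]] .
    finally have "(vnorm (disc_grad R u g k - v2 k))\<^sup>2 \<le> (vnorm (\<delta> k) + vnorm (\<delta> (eid d)))\<^sup>2"
      by (intro power_mono) auto
    also have "\<dots> \<le> 2 * (vnorm (\<delta> k))\<^sup>2 + 2 * (vnorm (\<delta> (eid d)))\<^sup>2"
      by (rule square_sum_le)
    finally show ?thesis unfolding sqn_eq_vnorm_sq .
  qed
  then have "(\<Sum>k\<in>R. sqn (disc_grad R u g k - v2 k))
      \<le> (\<Sum>k\<in>R. 2 * (vnorm (\<delta> k))\<^sup>2 + 2 * (vnorm (\<delta> (eid d)))\<^sup>2)"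
    by (rule sum_mono)
  also have "\<dots> = 2 * Q + 2 * real (card R) * (vnorm (\<delta> (eid d)))\<^sup>2"
    unfolding Q_def sum.distrib sum_distrib_left[symmetric] by simp
  also have "\<dots> \<le> 2 * (1 + real (card R)) * Q"
  proof -
    have "(vnorm (\<delta> (eid d)))\<^sup>2 \<le> Q" unfolding Q_def using fin e by (intro member_le_sum) auto
    then have "2 * real (card R) * (vnorm (\<delta> (eid d)))\<^sup>2 \<le> 2 * real (card R) * Q"
      by (intro mult_left_mono) auto
    then show ?thesis by (simp add: algebra_simps)
  qed
  finally have "sqrt (\<Sum>k\<in>R. sqn (disc_grad R u g k - v2 k)) \<le> sqrt (2 * (1 + real (card R))) * sqrt Q"
    by (simp add: real_sqrt_mult[symmetric])
  moreover have "grad_dist R u g \<le> sqrt (\<Sum>k\<in>R. sqn (disc_grad R u g k - v2 k))"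
    unfolding grad_dist_def using v2 by (rule rdist_le)
  moreover have "Q = (\<Sum>h\<in>R. sqn (u (emult g h) - w h))" unfolding Q_def \<delta>_def sqn_eq_vnorm_sq ..
  ultimately show ?thesis by simp
qed

lemma grad_dist_le_iso_dist:
  assumes R: "stencil R" and e: "eid d \<in> R" and u: "displacement u" and g: "g \<in> G"
  shows "grad_dist R u g \<le> sqrt (2 * (1 + real (card R))) * iso_dist R u g"
proof (rule le_if_le_add_mult_eps)
  fix \<epsilon> :: real assume \<epsilon>: "0 < \<epsilon>"
  have "U_iso00 d1 d2 x0 R \<noteq> {}" using zero_in_U_iso00[OF R] by blast
  moreover have "rdist R (\<lambda>h. u (emult g h)) (U_iso00 d1 d2 x0 R) < iso_dist R u g + \<epsilon>"
    unfolding iso_dist_def using \<epsilon> by simp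
  ultimately obtain w where w: "w \<in> U_iso00 d1 d2 x0 R"
    and w_close: "sqrt (\<Sum>h\<in>R. sqn (u (emult g h) - w h)) < iso_dist R u g + \<epsilon>"
    by (rule rdist_approx)
  have "sqrt (2 * (1 + real (card R))) * sqrt (\<Sum>h\<in>R. sqn (u (emult g h) - w h))
      \<le> sqrt (2 * (1 + real (card R))) * (iso_dist R u g + \<epsilon>)"
    using w_close by (intro mult_left_mono) auto
  then have "grad_dist R u g \<le> sqrt (2 * (1 + real (card R))) * (iso_dist R u g + \<epsilon>)"
    using grad_dist_le_dist_to_U_iso00[OF R e u g w] by linarith
  then show "grad_dist R u g \<le> sqrt (2 * (1 + real (card R))) * iso_dist R u g
      + sqrt (2 * (1 + real (card R))) * \<epsilon>"
    by (simp add: algebra_simps)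
qed

section \<open>Periodicity\<close>

definition TN :: "nat \<Rightarrow> euc set" where
  "TN N = Tpow d T N"

definition admissible_period :: "nat \<Rightarrow> bool" where
  "admissible_period N \<longleftrightarrow> 1 \<le> N \<and> m0 dvd N"

lemma TN_normal: "admissible_period N \<Longrightarrow> normal_sub_E d (TN N) G"
  using M_char unfolding admissible_period_def TN_def by auto

lemma TN_G: "admissible_period N \<Longrightarrow> t \<in> TN N \<Longrightarrow> t \<in> G"
  using TN_normal unfolding normal_sub_E_def by auto

lemma TN_einv: "admissible_period N \<Longrightarrow> t \<in> TN N \<Longrightarrow> einv t \<in> TN N"
  using TN_normal unfolding normal_sub_E_def subgroup_E_def by auto

lemma TN_conj: "admissible_period N \<Longrightarrow> g \<in> G \<Longrightarrow> t \<in> TN N \<Longrightarrow> emult (emult g t) (einv g) \<in> TN N"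
  using TN_normal unfolding normal_sub_E_def by auto

lemma C_representatives:
  assumes "admissible_period N"
  shows "C N \<subseteq> G" "finite (C N)" "\<And>g. g \<in> G \<Longrightarrow> \<exists>!c\<in>C N. \<exists>t\<in>TN N. g = emult c t"
  using C_rep assms unfolding admissible_period_def TN_def by auto

lemma periodic_conj:
  assumes N: "admissible_period N" and per: "periodic G (TN N) u" and g: "g \<in> G"
    and t: "t \<in> TN N" and k: "k \<in> G"
  shows "u (emult (emult g t) k) = u (emult g k)"
proof -
  \<comment> \<open>\<open>g t k = g k t'\<close> with \<open>t' = k\<^sup>-\<^sup>1 t k \<in> TN N\<close> by normality.\<close>
  have tG: "t \<in> G" using TN_G[OF N t] .
  define t' where "t' = emult (emult (einv k) t) k"
  have t': "t' \<in> TN N" unfolding t'_def using TN_conj[OF N einv_G[OF k] t] k by simp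
  have "emult (emult g k) t' = emult (emult g t) k"
    unfolding t'_def using g k tG by (simp add: emult_assoc_G emult_emult_einv_G)
  then show ?thesis using per g k t' unfolding periodic_def by (metis emult_G)
qed

lemma grad_dist_periodic:
  assumes N: "admissible_period N" and per: "periodic G (TN N) u" and R: "stencil R"
    and g: "g \<in> G" and t: "t \<in> TN N"
  shows "grad_dist R u (emult g t) = grad_dist R u g"
  unfolding grad_dist_def
proof (rule rdist_cong)
  fix h assume "h \<in> R"
  then have "u (emult (emult g t) h) = u (emult g h)"
    using periodic_conj[OF N per g t] stencilD[OF R] by blast
  moreover have "u (emult g t) = u g" using per g t unfolding periodic_def by simp
  ultimately show "disc_grad R u (emult g t) h = disc_grad R u g h"
    unfolding disc_grad_def by simp
qed

definition coset_rep :: "nat \<Rightarrow> euc \<Rightarrow> euc" where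
  "coset_rep N x = (THE c. c \<in> C N \<and> (\<exists>t\<in>TN N. x = emult c t))"

lemma coset_rep:
  assumes N: "admissible_period N" and x: "x \<in> G"
  shows "coset_rep N x \<in> C N" "\<exists>t\<in>TN N. x = emult (coset_rep N x) t"
proof -
  have "coset_rep N x \<in> C N \<and> (\<exists>t\<in>TN N. x = emult (coset_rep N x) t)"
    unfolding coset_rep_def by (rule theI') (use C_representatives(3)[OF N x] in auto)
  then show "coset_rep N x \<in> C N" "\<exists>t\<in>TN N. x = emult (coset_rep N x) t" by auto
qed

lemma coset_rep_emult_inj:
  assumes N: "admissible_period N" and p: "p \<in> G"
  shows "inj_on (\<lambda>g. coset_rep N (emult g p)) (C N)"
proof (rule inj_onI)
  note C = C_representatives[OF N]
  fix g1 g2 assume g1: "g1 \<in> C N" and g2: "g2 \<in> C N"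
    and eq: "coset_rep N (emult g1 p) = coset_rep N (emult g2 p)"
  define c where "c = coset_rep N (emult g1 p)"
  have "g1 \<in> G" using g1 C(1) by blast
  then have cG: "c \<in> G" unfolding c_def using coset_rep(1)[OF N emult_G[OF _ p]] C(1) by blast
  define q where "q = emult c (einv p)"
  have qG: "q \<in> G" unfolding q_def using cG p by simp
  \<comment> \<open>Both \<open>g\<^sub>1\<close> and \<open>g\<^sub>2\<close> represent the coset of \<open>c p\<^sup>-\<^sup>1\<close>.\<close>
  have coset: "\<exists>s\<in>TN N. q = emult gi s" if gi: "gi \<in> C N" and ci: "coset_rep N (emult gi p) = c" for gi
  proof -
    have giG: "gi \<in> G" using gi C(1) by auto
    obtain t where t: "t \<in> TN N" and e: "emult gi p = emult c t"
      using coset_rep(2)[OF N emult_G[OF giG p]] ci by blast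
    have tG: "t \<in> G" using TN_G[OF N t] .
    define s where "s = emult (emult p t) (einv p)"
    have s: "s \<in> TN N" unfolding s_def using TN_conj[OF N p t] .
    have "emult q s = emult (emult c t) (einv p)"
      unfolding q_def s_def using cG p tG by (simp add: emult_assoc_G emult_einv_emult_G)
    also have "\<dots> = gi" using emult_cancel_right_G[OF giG p e] ..
    finally have "q = emult gi (einv s)" using emult_cancel_right_G[OF qG TN_G[OF N s]] by simp
    then show ?thesis using TN_einv[OF N s] by blast
  qed
  have "\<exists>s\<in>TN N. q = emult g1 s" using coset[OF g1] unfolding c_def by simp
  moreover have "\<exists>s\<in>TN N. q = emult g2 s" using coset[OF g2] eq unfolding c_def by simp
  ultimately show "g1 = g2" using C(3)[OF qG] g1 g2 by blast
qed

lemma sum_C_emult_right: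
  assumes N: "admissible_period N" and f: "\<And>g t. g \<in> G \<Longrightarrow> t \<in> TN N \<Longrightarrow> f (emult g t) = f g"
    and p: "p \<in> G"
  shows "(\<Sum>g\<in>C N. f (emult g p)) = (\<Sum>g\<in>C N. f g)"
proof -
  note C = C_representatives[OF N]
  define \<sigma> where "\<sigma> g = coset_rep N (emult g p)" for g
  have \<sigma>C: "\<sigma> g \<in> C N" if "g \<in> C N" for g
  proof -
    have "g \<in> G" using that C(1) by blast
    then show ?thesis unfolding \<sigma>_def using coset_rep(1)[OF N emult_G[OF _ p]] by blast
  qed
  have f\<sigma>: "f (emult g p) = f (\<sigma> g)" if g: "g \<in> C N" for g
  proof -
    have gp: "emult g p \<in> G" using g C(1) p by auto
    obtain t where t: "t \<in> TN N" and "emult g p = emult (\<sigma> g) t"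
      using coset_rep(2)[OF N gp] unfolding \<sigma>_def by blast
    moreover have "\<sigma> g \<in> G" using \<sigma>C[OF g] C(1) by blast
    ultimately show ?thesis using f by simp
  qed
  have inj: "inj_on \<sigma> (C N)" unfolding \<sigma>_def using coset_rep_emult_inj[OF N p] .
  have "\<sigma> ` C N = C N" using endo_inj_surj[OF C(2) _ inj] \<sigma>C by blast
  then have "(\<Sum>g\<in>C N. f (\<sigma> g)) = (\<Sum>g\<in>C N. f g)" using sum.reindex[OF inj, of f] by simp
  then show ?thesis using f\<sigma> by simp
qed

lemma zero_on_G_if_zero_on_C:
  assumes N: "admissible_period N" and f: "\<And>g t. g \<in> G \<Longrightarrow> t \<in> TN N \<Longrightarrow> f (emult g t) = f g"
    and zero: "\<And>c. c \<in> C N \<Longrightarrow> f c = 0" and g: "g \<in> G"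
  shows "f g = 0"
proof -
  obtain t where t: "t \<in> TN N" and e: "g = emult (coset_rep N g) t" using coset_rep(2)[OF N g] by blast
  have "f g = f (coset_rep N g)"
    using f[OF _ t, of "coset_rep N g"] coset_rep(1)[OF N g] C_representatives(1)[OF N] e by auto
  then show ?thesis using zero coset_rep(1)[OF N g] by simp
qed

lemma iso_dist_sq_le_tol_sum:
  assumes R: "stencil R" and H: "stencil H" and u: "displacement u" and g: "g \<in> G"
    and \<epsilon>: "0 < \<epsilon>" and bound: "\<And>h. h \<in> H \<Longrightarrow> vnorm (fit_err R u \<epsilon> g (emult g h)) \<le> K * tol_sum R u \<epsilon> g P"
    and K: "0 \<le> K"
  shows "(iso_dist H u g)\<^sup>2
    \<le> real (card H) * K\<^sup>2 * real (length P) * (\<Sum>p\<leftarrow>P. 2 * (grad_dist R u (emult g p))\<^sup>2 + 2 * \<epsilon>\<^sup>2)"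
proof -
  have "(iso_dist H u g)\<^sup>2 \<le> (sqrt (\<Sum>h\<in>H. (vnorm (fit_err R u \<epsilon> g (emult g h)))\<^sup>2))\<^sup>2"
    using iso_dist_le_fit_err[OF R H u g \<epsilon>] iso_dist_nonneg[OF H] by (intro power_mono) auto
  also have "\<dots> = (\<Sum>h\<in>H. (vnorm (fit_err R u \<epsilon> g (emult g h)))\<^sup>2)"
    by (simp add: sum_nonneg)
  also have "\<dots> \<le> (\<Sum>h\<in>H. (K * tol_sum R u \<epsilon> g P)\<^sup>2)"
    using bound by (intro sum_mono power_mono) auto
  also have "\<dots> = real (card H) * K\<^sup>2 * (tol_sum R u \<epsilon> g P)\<^sup>2"
    by (simp add: power_mult_distrib)
  also have "(tol_sum R u \<epsilon> g P)\<^sup>2 \<le> real (length P) * (\<Sum>p\<leftarrow>P. (grad_dist R u (emult g p) + \<epsilon>)\<^sup>2)"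
    unfolding tol_sum_def by (rule sum_list_squared_le)
  also have "(\<Sum>p\<leftarrow>P. (grad_dist R u (emult g p) + \<epsilon>)\<^sup>2)
      \<le> (\<Sum>p\<leftarrow>P. 2 * (grad_dist R u (emult g p))\<^sup>2 + 2 * \<epsilon>\<^sup>2)"
    by (rule sum_list_mono) (rule square_sum_le)
  finally show ?thesis by (simp add: mult_left_mono mult.assoc)
qed

lemma sum_iso_dist_sq_le_sum_grad_dist_sq:
  assumes P2: "property2 d G x0 R" and H: "stencil H"
  shows "\<exists>K\<ge>0. \<forall>u N. displacement u \<longrightarrow> admissible_period N \<longrightarrow> periodic G (TN N) u \<longrightarrow>
     (\<Sum>g\<in>C N. (iso_dist H u g)\<^sup>2) \<le> K * (\<Sum>g\<in>C N. (grad_dist R u g)\<^sup>2)"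
proof -
  note R = property2D[OF P2]
  have "finite H" "H \<subseteq> G" using H unfolding stencil_def by auto
  then have "\<exists>K\<ge>0. \<exists>P. set P \<subseteq> G \<and> (\<forall>u \<epsilon>. displacement u \<longrightarrow> 0 < \<epsilon> \<longrightarrow>
      (\<forall>g\<in>G. \<forall>h\<in>H. vnorm (fit_err R u \<epsilon> g (emult g h)) \<le> K * tol_sum R u \<epsilon> g P))"
    using R(3) by (intro controlled_uniform[OF R(1)])
  then obtain K P where K: "0 \<le> K" "set P \<subseteq> G" and bound: "\<forall>u \<epsilon>. displacement u \<longrightarrow> 0 < \<epsilon> \<longrightarrow>
      (\<forall>g\<in>G. \<forall>h\<in>H. vnorm (fit_err R u \<epsilon> g (emult g h)) \<le> K * tol_sum R u \<epsilon> g P)"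
    by blast
  define c where "c = real (card H) * K\<^sup>2 * real (length P)"
  have c: "0 \<le> c" unfolding c_def by simp
  show ?thesis
  proof (intro exI[of _ "2 * c * real (length P)"] conjI allI impI)
    show "0 \<le> 2 * c * real (length P)" using c by simp
    fix u N assume u: "displacement u" and N: "admissible_period N" and per: "periodic G (TN N) u"
    note C = C_representatives[OF N]
    define GS where "GS = (\<Sum>g\<in>C N. (grad_dist R u g)\<^sup>2)"
    \<comment> \<open>Summing over \<open>C N\<close>, every translate \<open>g p\<close> contributes the same total by periodicity.\<close>
    have translate: "(\<Sum>g\<in>C N. (grad_dist R u (emult g p))\<^sup>2) = GS" if "p \<in> set P" for p
    proof -
      have "p \<in> G" using that K(2) by blast
      then show ?thesis unfolding GS_def
        by (intro sum_C_emult_right[OF N]) (simp_all add: grad_dist_periodic[OF N per R(1)])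
    qed
    show "(\<Sum>g\<in>C N. (iso_dist H u g)\<^sup>2) \<le> 2 * c * real (length P) * GS"
    proof (rule le_if_le_add_mult_eps)
      fix \<epsilon> :: real assume \<epsilon>: "0 < \<epsilon>" "\<epsilon> \<le> 1"
      define x where "x g p = 2 * (grad_dist R u (emult g p))\<^sup>2 + 2 * \<epsilon>\<^sup>2" for g p
      have "(iso_dist H u g)\<^sup>2 \<le> c * (\<Sum>p\<leftarrow>P. x g p)" if "g \<in> C N" for g
      proof -
        have g: "g \<in> G" using that C(1) by blast
        show ?thesis unfolding c_def x_def
          by (rule iso_dist_sq_le_tol_sum[OF R(1) H u g \<epsilon>(1) _ K(1)]) (use bound u \<epsilon> g in blast)
      qed
      then have "(\<Sum>g\<in>C N. (iso_dist H u g)\<^sup>2) \<le> (\<Sum>g\<in>C N. c * (\<Sum>p\<leftarrow>P. x g p))"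
        by (rule sum_mono)
      also have "\<dots> = c * (\<Sum>p\<leftarrow>P. \<Sum>g\<in>C N. x g p)"
        by (simp only: sum_distrib_left[symmetric] sum_sum_list_swap)
      also have "(\<Sum>p\<leftarrow>P. \<Sum>g\<in>C N. x g p) = (\<Sum>p\<leftarrow>P. 2 * GS + 2 * \<epsilon>\<^sup>2 * real (card (C N)))"
        unfolding x_def
        by (rule arg_cong[where f = sum_list], rule map_cong[OF refl])
          (simp add: sum.distrib sum_distrib_left[symmetric] translate)
      also have "\<dots> = real (length P) * (2 * GS + 2 * \<epsilon>\<^sup>2 * real (card (C N)))"
        by (simp add: sum_list_triv)
      also have "c * \<dots> \<le> 2 * c * real (length P) * GS + 2 * c * real (length P) * real (card (C N)) * \<epsilon>"
      proof -
        have "\<epsilon>\<^sup>2 \<le> \<epsilon>" using \<epsilon> by (simp add: power2_eq_square mult_left_le)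
        then have "c * real (length P) * (2 * real (card (C N)) * \<epsilon>\<^sup>2)
            \<le> c * real (length P) * (2 * real (card (C N)) * \<epsilon>)"
          using c by (intro mult_left_mono) auto
        then show ?thesis by (simp add: algebra_simps)
      qed
      finally show "(\<Sum>g\<in>C N. (iso_dist H u g)\<^sup>2)
          \<le> 2 * c * real (length P) * GS + 2 * c * real (length P) * real (card (C N)) * \<epsilon>" .
    qed
  qed
qed

section \<open>Infinitesimal isometries\<close>

lemma conj_pad_skew:
  assumes g: "g \<in> G" and X: "X \<in> skew d1"
  shows "\<exists>Y\<in>skew d1. (rot g)\<^sup>T * pad X * rot g = pad Y"
proof -
  obtain A s where A: "A \<in> orth_mat d1" and s: "s \<in> S" and g_eq: "g = osum d1 d2 A s"
    using G_form g by blast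
  have Ac: "A \<in> carrier_mat d1 d1" using orth_matD(1)[OF A] .
  have B: "fst s \<in> carrier_mat d2 d2"
    using EucD(1) s S_sg unfolding space_group_def subgroup_E_def by blast
  have Xc: "X \<in> carrier_mat d1 d1" using skew_carrier[OF X] .
  \<comment> \<open>Elements of \<open>G\<close> are block diagonal, so conjugation preserves the block structure of \<open>pad X\<close>.\<close>
  have rot_g: "rot g = four_block_mat A (0\<^sub>m d1 d2) (0\<^sub>m d2 d1) (fst s)"
    unfolding g_eq osum_def rot_def by simp
  have rot_gT: "(rot g)\<^sup>T = four_block_mat A\<^sup>T (0\<^sub>m d1 d2) (0\<^sub>m d2 d1) (fst s)\<^sup>T"
    unfolding rot_g using transpose_four_block_mat[OF Ac zero_carrier_mat zero_carrier_mat B] Ac B by simp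
  have left: "(rot g)\<^sup>T * pad X = four_block_mat (A\<^sup>T * X) (0\<^sub>m d1 d2) (0\<^sub>m d2 d1) (0\<^sub>m d2 d2)"
    unfolding rot_gT pad_def using Ac B Xc by (subst mult_four_block_mat[of _ d1 d1 _ d2 _ d2 _ _ d1 _ d2]) auto
  have "(rot g)\<^sup>T * pad X * rot g = pad (A\<^sup>T * X * A)"
    unfolding left unfolding pad_def rot_g using Ac B Xc by (subst mult_four_block_mat[of _ d1 d1 _ d2 _ d2 _ _ d1 _ d2]) auto
  then show ?thesis using skew_conj[OF X Ac] by blast
qed

lemma rigid_if_mem_U_iso00:
  assumes u: "displacement u" and "u \<in> U_iso00 d1 d2 x0 G"
  shows "\<exists>X\<in>skew d1. \<forall>x\<in>G. rot_disp u x = u (eid d) + pad X *\<^sub>v (orb x - x0)"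
proof -
  obtain v1 v2 where u_eq: "u = (\<lambda>x. v1 x + v2 x)" and v1: "v1 \<in> U_trans (d1 + d2) G"
    and v2: "v2 \<in> U_rot00 d1 d2 x0 G" using assms(2) unfolding U_iso00_def by blast
  obtain a where a: "a \<in> carrier_vec d" and v1_carrier: "\<forall>x\<in>G. v1 x \<in> carrier_vec d"
    and v1a: "\<forall>x\<in>G. rot x *\<^sub>v v1 x = a" using v1 unfolding mem_U_trans_iff by blast
  obtain X where X: "X \<in> skew d1" and v2_carrier: "\<forall>x\<in>G. v2 x \<in> carrier_vec d"
    and v2X: "\<forall>x\<in>G. rot x *\<^sub>v v2 x = pad X *\<^sub>v (orb x - x0)" using v2 unfolding mem_U_rot00_iff by blast
  have rot_u: "rot_disp u x = a + pad X *\<^sub>v (orb x - x0)" if x: "x \<in> G" for x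
  proof -
    have "rot_disp u x = rot x *\<^sub>v v1 x + rot x *\<^sub>v v2 x"
      unfolding rot_disp_def u_eq using rot_G(1)[OF x] v1_carrier v2_carrier x
      by (intro mult_add_distrib_mat_vec) auto
    then show ?thesis using v1a v2X x by simp
  qed
  have "x0 - x0 = 0\<^sub>v d" using x0_dim by (intro eq_vecI) auto
  then have "rot_disp u (eid d) = a"
    using rot_u[OF eid_G] a mult_mat_vec_zero[OF pad_skew_carrier[OF X]] by simp
  moreover have "rot_disp u (eid d) = u (eid d)"
    unfolding rot_disp_def rot_eid using displacementD[OF u eid_G] by simp
  ultimately show ?thesis using rot_u X by auto
qed

lemma mem_U_iso00_if_rigid:
  assumes u: "displacement u" and X: "X \<in> skew d1"
    and rot_u: "\<And>x. x \<in> G \<Longrightarrow> rot_disp u x = u (eid d) + pad X *\<^sub>v (orb x - x0)"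
  shows "u \<in> U_iso00 d1 d2 x0 G"
proof -
  have pX: "pad X \<in> carrier_mat d d" using pad_skew_carrier[OF X] .
  have ue: "u (eid d) \<in> carrier_vec d" using displacementD[OF u eid_G] .
  \<comment> \<open>Off \<open>G\<close> the splitting is arbitrary; there we put everything into the translation part.\<close>
  define v1 where "v1 x = (if x \<in> G then (rot x)\<^sup>T *\<^sub>v u (eid d) else u x)" for x
  define v2 where "v2 x = (if x \<in> G then (rot x)\<^sup>T *\<^sub>v (pad X *\<^sub>v (orb x - x0)) else 0\<^sub>v (dim_vec (u x)))" for x
  have pc: "pad X *\<^sub>v (orb x - x0) \<in> carrier_vec d" if "x \<in> G" for x
    using pX orb_diff_carrier[OF that] by simp
  have u_eq: "u = (\<lambda>x. v1 x + v2 x)"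
  proof (rule ext)
    fix x show "u x = v1 x + v2 x"
    proof (cases "x \<in> G")
      case True
      have ux: "u x \<in> carrier_vec d" using displacementD[OF u True] .
      have "v1 x = (rot x)\<^sup>T *\<^sub>v u (eid d)" "v2 x = (rot x)\<^sup>T *\<^sub>v (pad X *\<^sub>v (orb x - x0))"
        unfolding v1_def v2_def using True by simp_all
      then have "v1 x + v2 x = (rot x)\<^sup>T *\<^sub>v (u (eid d) + pad X *\<^sub>v (orb x - x0))"
        using mult_add_distrib_mat_vec[OF rot_G(2)[OF True] ue pc[OF True]] by simp
      also have "\<dots> = (rot x)\<^sup>T *\<^sub>v (rot x *\<^sub>v u x)" using rot_u[OF True] unfolding rot_disp_def by simp
      also have "\<dots> = u x" using rot_G[OF True] ux by (intro mat_vec_cancel) auto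
      finally show ?thesis by simp
    next
      case False
      have "v1 x = u x" unfolding v1_def by (rule if_not_P[OF False])
      moreover have "v2 x = 0\<^sub>v (dim_vec (u x))" unfolding v2_def by (rule if_not_P[OF False])
      moreover have "u x + 0\<^sub>v (dim_vec (u x)) = u x" by (rule right_zero_vec, rule carrier_vecI, rule refl)
      ultimately show ?thesis by (simp only:)
    qed
  qed
  have "v1 x \<in> carrier_vec d" "rot x *\<^sub>v v1 x = u (eid d)"
    "v2 x \<in> carrier_vec d" "rot x *\<^sub>v v2 x = pad X *\<^sub>v (orb x - x0)" if x: "x \<in> G" for x
  proof -
    note rx = rot_G[OF x]
    show "v1 x \<in> carrier_vec d" "v2 x \<in> carrier_vec d"
      unfolding v1_def v2_def using x rx(2) ue pc[OF x] by simp_all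
    show "rot x *\<^sub>v v1 x = u (eid d)" "rot x *\<^sub>v v2 x = pad X *\<^sub>v (orb x - x0)"
      unfolding v1_def v2_def using x mat_vec_cancel[OF rx(1,2,3)] ue pc[OF x] by simp_all
  qed
  then have "v1 \<in> U_trans (d1 + d2) G" "v2 \<in> U_rot00 d1 d2 x0 G"
    unfolding mem_U_trans_iff mem_U_rot00_iff using ue X by blast+
  then show ?thesis
    unfolding U_iso00_def u_eq mem_Collect_eq by (intro exI[of _ v1] exI[of _ v2] conjI refl)
qed

lemma grad_dist_zero_if_rigid:
  assumes R: "stencil R" and u: "displacement u" and g: "g \<in> G" and X: "X \<in> skew d1"
    and rot_u: "\<And>x. x \<in> G \<Longrightarrow> rot_disp u x = u (eid d) + pad X *\<^sub>v (orb x - x0)"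
  shows "grad_dist R u g = 0"
proof -
  obtain Y where Y: "Y \<in> skew d1" and YX: "(rot g)\<^sup>T * pad X * rot g = pad Y"
    using conj_pad_skew[OF g X] by blast
  have pX: "pad X \<in> carrier_mat d d" using pad_skew_carrier[OF X] .
  have ue: "u (eid d) \<in> carrier_vec d" using displacementD[OF u eid_G] .
  have "rot k *\<^sub>v disc_grad R u g k = pad Y *\<^sub>v (orb k - x0)" if k: "k \<in> R" for k
  proof -
    have kG: "k \<in> G" using stencilD[OF R k] .
    have gk: "emult g k \<in> G" using g kG by simp
    have ug: "u g \<in> carrier_vec d" and ugk: "u (emult g k) \<in> carrier_vec d"
      using displacementD[OF u] g gk by auto
    have "rot k *\<^sub>v u (emult g k) = (rot g)\<^sup>T *\<^sub>v rot_disp u (emult g k)"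
      unfolding rot_disp_def rot_emult using rot_G[OF g] rot_G[OF kG] ugk
      by (simp add: assoc_mult_mat_vec[of _ d d _ d] mat_vec_cancel)
    moreover have "u g = (rot g)\<^sup>T *\<^sub>v rot_disp u g"
      unfolding rot_disp_def using rot_G[OF g] ug by (simp add: mat_vec_cancel)
    moreover have "rot_disp u (emult g k) - rot_disp u g = pad X *\<^sub>v (orb (emult g k) - orb g)"
      unfolding rot_u[OF gk] rot_u[OF g] using pX orb_carrier[OF gk] orb_carrier[OF g] x0_dim ue
      by (intro eq_vecI) (auto simp: mult_minus_distrib_mat_vec)
    ultimately have "rot k *\<^sub>v u (emult g k) - u g = (rot g)\<^sup>T *\<^sub>v (pad X *\<^sub>v (rot g *\<^sub>v (orb k - x0)))"
      unfolding orb_emult[OF g kG]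
      using rot_G[OF g] rot_disp_carrier[OF u gk] rot_disp_carrier[OF u g]
      by (simp add: mult_minus_distrib_mat_vec[symmetric])
    also have "\<dots> = ((rot g)\<^sup>T * pad X * rot g) *\<^sub>v (orb k - x0)"
      using rot_G[OF g] pX orb_diff_carrier[OF kG] by (intro assoc_mult_mat_vec3[symmetric]) auto
    also have "\<dots> = pad Y *\<^sub>v (orb k - x0)" unfolding YX ..
    finally show ?thesis using rot_disc_grad[OF u g kG] by simp
  qed
  moreover have "disc_grad R u g k \<in> carrier_vec d" if "k \<in> R" for k
    using displacementD[OF u] g stencilD[OF R that] rot_G(2)[OF stencilD[OF R that]]
    unfolding disc_grad_def by simp
  ultimately have "disc_grad R u g \<in> U_rot00 d1 d2 x0 R"
    unfolding mem_U_rot00_iff using Y by blast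
  then have "grad_dist R u g \<le> sqrt (\<Sum>h\<in>R. sqn (disc_grad R u g h - disc_grad R u g h))"
    unfolding grad_dist_def by (rule rdist_le)
  also have "\<dots> = 0" by (simp add: sqn_def scalar_prod_def)
  finally show ?thesis using grad_dist_nonneg[OF R, of u g] by simp
qed

lemma unit_vec_in_Vaff: "d - daff \<le> j \<Longrightarrow> j < d \<Longrightarrow> unit_vec d j \<in> Vaff"
  unfolding Vaff_def by auto

lemma index_mult_mat_vec_Vaff:
  assumes M: "M \<in> carrier_mat d d" and z: "z \<in> Vaff" and i: "i < d"
  shows "(M *\<^sub>v z) $ i = (\<Sum>l\<in>{d - daff..<d}. M $$ (i, l) * z $ l)"
proof -
  have "(\<Sum>l<d. M $$ (i, l) * z $ l) = (\<Sum>l\<in>{d - daff..<d}. M $$ (i, l) * z $ l)"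
  proof (rule sum.mono_neutral_right)
    show "\<forall>l\<in>{..<d} - {d - daff..<d}. M $$ (i, l) * z $ l = 0" using z unfolding Vaff_def by auto
  qed auto
  then show ?thesis using index_mult_mat_vec_sum[OF M Vaff_carrier[OF z] i] by simp
qed

lemma skew_completion:
  assumes zero: "\<And>i j. d - daff \<le> j \<Longrightarrow> j < d \<Longrightarrow> i < d \<Longrightarrow> d1 \<le> i \<or> d1 \<le> j \<Longrightarrow> m j $ i = 0"
    and skew: "\<And>i j. d - daff \<le> i \<Longrightarrow> d - daff \<le> j \<Longrightarrow> i < d1 \<Longrightarrow> j < d1 \<Longrightarrow> m j $ i = - m i $ j"
  shows "\<exists>S0\<in>skew d1. \<forall>i<d. \<forall>l\<in>{d - daff..<d}. pad S0 $$ (i, l) = m l $ i"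
proof -
  define J where "J = {d - daff..<d}"
  \<comment> \<open>Columns outside \<open>J\<close> are fixed by skewness from the rows of the given ones.\<close>
  define S0 where "S0 = mat d1 d1 (\<lambda>(i, j). if j \<in> J then m j $ i else if i \<in> J then - m i $ j else 0)"
  have c: "S0 \<in> carrier_mat d1 d1" unfolding S0_def by simp
  have S0_skew: "S0 $$ (j, i) = - S0 $$ (i, j)" if "i < d1" "j < d1" for i j
  proof (cases "i \<in> J \<and> j \<in> J")
    case True
    then have "m i $ j = - m j $ i" using skew[of j i] that unfolding J_def by auto
    then show ?thesis using True that unfolding S0_def by simp
  next
    case False
    then show ?thesis using that unfolding S0_def by auto
  qed
  have "S0\<^sup>T = - S0"
  proof (rule eq_matI)
    fix i j assume "i < dim_row (- S0)" "j < dim_col (- S0)"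
    then have ij: "i < d1" "j < d1" using c by auto
    then have "S0\<^sup>T $$ (i, j) = S0 $$ (j, i)" "(- S0) $$ (i, j) = - S0 $$ (i, j)" using c by auto
    then show "S0\<^sup>T $$ (i, j) = (- S0) $$ (i, j)" by (simp only: S0_skew[OF ij])
  qed (use c in auto)
  then have "S0 \<in> skew d1" using c unfolding skew_def by simp
  moreover have "pad S0 $$ (i, l) = m l $ i" if "i < d" "l \<in> J" for i l
  proof -
    have l: "d - daff \<le> l" "l < d" using that(2) unfolding J_def by auto
    show ?thesis
      using index_pad[OF c that(1) l(2)] zero[OF l that(1)] that(2) unfolding S0_def by auto
  qed
  ultimately show ?thesis unfolding J_def by blast
qed

text \<open>Only the columns of \<open>pad (X \<epsilon>)\<close> in the directions of \<open>Vaff\<close> converge as \<open>\<epsilon> \<rightarrow> 0\<close>; the limit is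
  completed by skewness.\<close>

context
  fixes R :: "euc set" and \<Lambda> :: real and F :: "euc \<Rightarrow> real vec" and X :: "real \<Rightarrow> real mat"
  assumes R_spans: "spans_Vaff R \<Lambda>" and R_stencil: "stencil R"
    and X_skew: "\<And>\<epsilon>. 0 < \<epsilon> \<Longrightarrow> X \<epsilon> \<in> skew d1"
    and F_carrier: "\<And>h. h \<in> G \<Longrightarrow> F h \<in> carrier_vec d"
    and F_approx: "\<And>h. h \<in> G \<Longrightarrow> \<exists>K. \<forall>\<epsilon>>0. vnorm (F h - pad (X \<epsilon>) *\<^sub>v (orb h - x0)) \<le> K * \<epsilon>"
begin

lemma pad_column_converges:
  assumes j: "d - daff \<le> j" "j < d"
  shows "\<exists>m. \<exists>K. \<forall>\<epsilon>>0. \<forall>i<d. \<bar>pad (X \<epsilon>) $$ (i, j) - m $ i\<bar> \<le> K * \<epsilon>"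
proof -
  obtain c where c: "\<forall>i<d. unit_vec d j $ i = (\<Sum>r\<in>R. c r * (orb r - x0) $ i)"
    using R_spans unit_vec_in_Vaff[OF j] unfolding spans_Vaff_def by blast
  have R: "finite R" "R \<subseteq> G" using R_stencil unfolding stencil_def by auto
  obtain Kf where Kf: "\<And>h \<epsilon>. h \<in> G \<Longrightarrow> 0 < \<epsilon> \<Longrightarrow> vnorm (F h - pad (X \<epsilon>) *\<^sub>v (orb h - x0)) \<le> Kf h * \<epsilon>"
    using bchoice[of G "\<lambda>h K. \<forall>\<epsilon>>0. vnorm (F h - pad (X \<epsilon>) *\<^sub>v (orb h - x0)) \<le> K * \<epsilon>"] F_approx by blast
  define m where "m = vec d (\<lambda>i. \<Sum>r\<in>R. c r * F r $ i)"
  have "\<bar>pad (X \<epsilon>) $$ (i, j) - m $ i\<bar> \<le> (\<Sum>r\<in>R. \<bar>c r\<bar> * Kf r) * \<epsilon>" if \<epsilon>: "0 < \<epsilon>" and i: "i < d" for \<epsilon> i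
  proof -
    define M where "M = pad (X \<epsilon>)"
    have M: "M \<in> carrier_mat d d" unfolding M_def using pad_skew_carrier[OF X_skew[OF \<epsilon>]] .
    have "M $$ (i, j) = (M *\<^sub>v unit_vec d j) $ i" using M i j by simp
    also have "\<dots> = (\<Sum>r\<in>R. c r * (M *\<^sub>v (orb r - x0)) $ i)"
      using c i R orb_diff_carrier by (intro mult_mat_vec_lin_comb[OF M]) auto
    finally have "M $$ (i, j) - m $ i = (\<Sum>r\<in>R. c r * ((M *\<^sub>v (orb r - x0)) $ i - F r $ i))"
      unfolding m_def using i by (simp add: sum_subtractf right_diff_distrib)
    then have "\<bar>M $$ (i, j) - m $ i\<bar> \<le> (\<Sum>r\<in>R. \<bar>c r\<bar> * \<bar>(F r - M *\<^sub>v (orb r - x0)) $ i\<bar>)"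
      using i M R F_carrier orb_diff_carrier
      by (auto simp: abs_mult abs_minus_commute intro!: order_trans[OF sum_abs] sum_mono)
    also have "\<dots> \<le> (\<Sum>r\<in>R. \<bar>c r\<bar> * (Kf r * \<epsilon>))"
    proof (intro sum_mono mult_left_mono)
      fix r assume r: "r \<in> R"
      have "r \<in> G" using r R by auto
      then have "\<bar>(F r - M *\<^sub>v (orb r - x0)) $ i\<bar> \<le> vnorm (F r - M *\<^sub>v (orb r - x0))"
        using i M F_carrier orb_diff_carrier by (intro abs_index_le_vnorm) simp
      also have "\<dots> \<le> Kf r * \<epsilon>" unfolding M_def using Kf \<open>r \<in> G\<close> \<epsilon> by blast
      finally show "\<bar>(F r - M *\<^sub>v (orb r - x0)) $ i\<bar> \<le> Kf r * \<epsilon>" .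
    qed simp
    finally show ?thesis unfolding M_def by (simp add: sum_distrib_right mult.assoc)
  qed
  then show ?thesis by blast
qed

lemma pad_limit_zero:
  assumes lim: "\<And>\<epsilon>. 0 < \<epsilon> \<Longrightarrow> \<bar>pad (X \<epsilon>) $$ (i, j) - \<mu>\<bar> \<le> K * \<epsilon>"
    and ij: "i < d" "j < d" "d1 \<le> i \<or> d1 \<le> j"
  shows "\<mu> = 0"
proof (rule eq_if_approx[OF lim])
  fix \<epsilon> :: real assume "0 < \<epsilon>"
  then show "\<bar>pad (X \<epsilon>) $$ (i, j) - 0\<bar> \<le> 0 * \<epsilon>"
    using index_pad[OF skew_carrier[OF X_skew] ij(1,2)] ij(3) by auto
qed

lemma pad_limit_skew:
  assumes lim1: "\<And>\<epsilon>. 0 < \<epsilon> \<Longrightarrow> \<bar>pad (X \<epsilon>) $$ (i, j) - \<mu>\<bar> \<le> K * \<epsilon>"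
    and lim2: "\<And>\<epsilon>. 0 < \<epsilon> \<Longrightarrow> \<bar>pad (X \<epsilon>) $$ (j, i) - \<nu>\<bar> \<le> K' * \<epsilon>"
    and ij: "i < d1" "j < d1"
  shows "\<mu> = - \<nu>"
proof (rule eq_if_approx[OF lim1])
  fix \<epsilon> :: real assume \<epsilon>: "0 < \<epsilon>"
  have Xc: "X \<epsilon> \<in> carrier_mat d1 d1" and XT: "(X \<epsilon>)\<^sup>T = - X \<epsilon>"
    using X_skew[OF \<epsilon>] unfolding skew_def by auto
  have "(X \<epsilon>)\<^sup>T $$ (j, i) = (- X \<epsilon>) $$ (j, i)" unfolding XT ..
  then have "X \<epsilon> $$ (i, j) = - X \<epsilon> $$ (j, i)" using Xc ij by simp
  then have "pad (X \<epsilon>) $$ (i, j) = - pad (X \<epsilon>) $$ (j, i)"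
    using index_pad[OF skew_carrier[OF X_skew[OF \<epsilon>]]] ij unfolding d_def by simp
  then show "\<bar>pad (X \<epsilon>) $$ (i, j) - - \<nu>\<bar> \<le> K' * \<epsilon>" using lim2[OF \<epsilon>] by simp
qed

lemma exists_skew_limit: "\<exists>S0\<in>skew d1. \<forall>h\<in>G. F h = pad S0 *\<^sub>v (orb h - x0)"
proof -
  define J where "J = {d - daff..<d}"
  define m where "m j = (SOME m. \<exists>K. \<forall>\<epsilon>>0. \<forall>i<d. \<bar>pad (X \<epsilon>) $$ (i, j) - m $ i\<bar> \<le> K * \<epsilon>)" for j
  define K where "K j = (SOME K. \<forall>\<epsilon>>0. \<forall>i<d. \<bar>pad (X \<epsilon>) $$ (i, j) - m j $ i\<bar> \<le> K * \<epsilon>)" for j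
  have Jd: "j \<in> J \<Longrightarrow> j < d" for j unfolding J_def by auto
  have mK: "\<bar>pad (X \<epsilon>) $$ (i, j) - m j $ i\<bar> \<le> K j * \<epsilon>" if "j \<in> J" "0 < \<epsilon>" "i < d" for j \<epsilon> i
  proof -
    have "\<exists>K. \<forall>\<epsilon>>0. \<forall>i<d. \<bar>pad (X \<epsilon>) $$ (i, j) - m j $ i\<bar> \<le> K * \<epsilon>"
      unfolding m_def by (rule someI_ex) (use pad_column_converges[of j] that(1) in \<open>auto simp: J_def\<close>)
    then have "\<forall>\<epsilon>>0. \<forall>i<d. \<bar>pad (X \<epsilon>) $$ (i, j) - m j $ i\<bar> \<le> K j * \<epsilon>"
      unfolding K_def by (rule someI_ex)
    then show ?thesis using that(2,3) by blast
  qed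
  have "m j $ i = 0" if "d - daff \<le> j" "j < d" "i < d" "d1 \<le> i \<or> d1 \<le> j" for i j
  proof -
    have "j \<in> J" using that unfolding J_def by auto
    then show ?thesis
      by (intro pad_limit_zero[where i = i and j = j and K = "K j"] mK that(2-4))
  qed
  moreover have "m j $ i = - m i $ j" if "d - daff \<le> i" "d - daff \<le> j" "i < d1" "j < d1" for i j
  proof -
    have "i \<in> J" "j \<in> J" "i < d" "j < d" using that unfolding J_def d_def by auto
    then show ?thesis
      by (intro pad_limit_skew[where i = i and j = j and K = "K j" and K' = "K i"] mK \<open>i < d1\<close> \<open>j < d1\<close>)
  qed
  ultimately obtain S0 where S0: "S0 \<in> skew d1" and pad_S0: "\<And>i l. i < d \<Longrightarrow> l \<in> J \<Longrightarrow> pad S0 $$ (i, l) = m l $ i"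
    using skew_completion[of m] unfolding J_def by blast
  have "F h = pad S0 *\<^sub>v (orb h - x0)" if h: "h \<in> G" for h
  proof (rule eq_vecI)
    define z where "z = orb h - x0"
    have z: "z \<in> Vaff" unfolding z_def using orb_diff_in_Vaff[OF h eid_G] by simp
    obtain Kh where Kh: "\<And>\<epsilon>. 0 < \<epsilon> \<Longrightarrow> vnorm (F h - pad (X \<epsilon>) *\<^sub>v z) \<le> Kh * \<epsilon>"
      using F_approx[OF h] unfolding z_def by blast
    have pS0: "pad S0 \<in> carrier_mat d d" using pad_carrier[OF skew_carrier[OF S0]] .
    fix i assume "i < dim_vec (pad S0 *\<^sub>v (orb h - x0))"
    then have i: "i < d" using pS0 by simp
    show "F h $ i = (pad S0 *\<^sub>v (orb h - x0)) $ i"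
    proof (rule eq_if_approx)
      fix \<epsilon> :: real assume \<epsilon>: "0 < \<epsilon>"
      have M: "pad (X \<epsilon>) \<in> carrier_mat d d" using pad_skew_carrier[OF X_skew[OF \<epsilon>]] .
      show "\<bar>(pad (X \<epsilon>) *\<^sub>v z) $ i - F h $ i\<bar> \<le> Kh * \<epsilon>"
        using abs_index_le_vnorm[of i "F h - pad (X \<epsilon>) *\<^sub>v z"] Kh[OF \<epsilon>] F_carrier[OF h] M Vaff_carrier[OF z] i
        by (simp add: abs_minus_commute)
      have "\<bar>(pad (X \<epsilon>) *\<^sub>v z) $ i - (pad S0 *\<^sub>v z) $ i\<bar> = \<bar>\<Sum>l\<in>J. (pad (X \<epsilon>) $$ (i, l) - m l $ i) * z $ l\<bar>"
        unfolding index_mult_mat_vec_Vaff[OF M z i] index_mult_mat_vec_Vaff[OF pS0 z i] J_def[symmetric]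
        using pad_S0[OF i] by (simp add: sum_subtractf left_diff_distrib)
      also have "\<dots> \<le> (\<Sum>l\<in>J. K l * \<epsilon> * \<bar>z $ l\<bar>)"
        using mK[OF _ \<epsilon> i] by (auto simp: abs_mult intro!: order_trans[OF sum_abs] sum_mono mult_right_mono)
      finally show "\<bar>(pad (X \<epsilon>) *\<^sub>v z) $ i - (pad S0 *\<^sub>v (orb h - x0)) $ i\<bar> \<le> (\<Sum>l\<in>J. K l * \<bar>z $ l\<bar>) * \<epsilon>"
        unfolding z_def[symmetric] by (simp add: sum_distrib_left ac_simps)
    qed
  qed (use pad_carrier[OF skew_carrier[OF S0]] F_carrier[OF h] in simp)
  then show ?thesis using S0 by blast
qed

end

lemma rigid_if_grad_dist_zero:
  assumes P2: "property2 d G x0 R" and u: "displacement u" and zero: "\<And>g. g \<in> G \<Longrightarrow> grad_dist R u g = 0"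
  shows "\<exists>X\<in>skew d1. \<forall>x\<in>G. rot_disp u x = u (eid d) + pad X *\<^sub>v (orb x - x0)"
proof -
  note R = property2D[OF P2]
  obtain R'' where P1: "property1 d G x0 R''" using P2 unfolding property2_def by blast
  obtain \<Lambda> where sp: "spans_Vaff R'' \<Lambda>" using property1_spans_Vaff[OF P1] by blast
  have R'': "stencil R''" using P1 unfolding property1_def stencil_def by auto
  have ue: "u (eid d) \<in> carrier_vec d" using displacementD[OF u eid_G] .
  define F where "F h = rot_disp u h - u (eid d)" for h
  have F_carrier: "F h \<in> carrier_vec d" if "h \<in> G" for h
    unfolding F_def using rot_disp_carrier[OF u that] ue by simp
  \<comment> \<open>With \<open>grad_dist R u = 0\<close> the tolerances are \<open>\<epsilon>\<close>, so the fits at the identity converge on the orbit.\<close>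
  have approx: "\<exists>K. \<forall>\<epsilon>>0. vnorm (F h - pad (fit R u \<epsilon> (eid d)) *\<^sub>v (orb h - x0)) \<le> K * \<epsilon>"
    if h: "h \<in> G" for h
  proof -
    obtain K P where P: "set P \<subseteq> G" and bound: "\<And>\<epsilon>. 0 < \<epsilon> \<Longrightarrow>
        vnorm (fit_err R u \<epsilon> (eid d) (emult (eid d) h)) \<le> K * tol_sum R u \<epsilon> (eid d) P"
      using R(3)[OF h] u unfolding controlled_def by (meson eid_G)
    have "vnorm (F h - pad (fit R u \<epsilon> (eid d)) *\<^sub>v (orb h - x0)) \<le> K * real (length P) * \<epsilon>" if \<epsilon>: "0 < \<epsilon>" for \<epsilon>
    proof -
      have "tol_sum R u \<epsilon> (eid d) P = real (length P) * \<epsilon>"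
        unfolding tol_sum_def using P zero by (simp add: sum_list_triv subset_code(1) cong: map_cong)
      moreover have "fit_err R u \<epsilon> (eid d) (emult (eid d) h) = F h - pad (fit R u \<epsilon> (eid d)) *\<^sub>v (orb h - x0)"
      proof -
        have "rot h *\<^sub>v u h - u (eid d) - pad (fit R u \<epsilon> (eid d)) *\<^sub>v (orb h - x0) \<in> carrier_vec d"
          using rot_G(1)[OF h] displacementD[OF u h] ue pad_skew_carrier[OF fit_skew[OF R(1) u eid_G \<epsilon>]]
            orb_diff_carrier[OF h] by simp
        then show ?thesis
          using fit_err_emult[OF R(1) u eid_G h \<epsilon>]
          unfolding emult_eid_left_G[OF h] F_def rot_disp_def rot_eid by simp
      qed
      ultimately show ?thesis using bound[OF \<epsilon>] by (simp add: mult.assoc)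
    qed
    then show ?thesis by blast
  qed
  obtain S0 where S0: "S0 \<in> skew d1" and F_eq: "\<And>h. h \<in> G \<Longrightarrow> F h = pad S0 *\<^sub>v (orb h - x0)"
    using exists_skew_limit[where X = "\<lambda>\<epsilon>. fit R u \<epsilon> (eid d)" and F = F,
        OF sp R'' fit_skew[OF R(1) u eid_G] F_carrier approx] by blast
  have "rot_disp u x = u (eid d) + pad S0 *\<^sub>v (orb x - x0)" if x: "x \<in> G" for x
  proof -
    have "rot_disp u x = u (eid d) + (rot_disp u x - u (eid d))"
      using rot_disp_carrier[OF u x] ue by (intro eq_vecI) auto
    then show ?thesis using F_eq[OF x] unfolding F_def by simp
  qed
  then show ?thesis using S0 by blast
qed

section \<open>Equivalence of the seminorms and their kernel\<close>

abbreviation seminorm_list :: "euc set \<Rightarrow> euc set \<Rightarrow> nat \<Rightarrow> ((euc \<Rightarrow> real vec) \<Rightarrow> real) list" where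
  "seminorm_list R1 R2 N \<equiv> [norm00 d1 d2 x0 R1 (C N), norm00 d1 d2 x0 R2 (C N),
     semi00 d1 d2 x0 R1 (C N), semi00 d1 d2 x0 R2 (C N)]"

lemma norm00_eq_rms: "norm00 d1 d2 x0 R A u = rms A (iso_dist R u)"
  unfolding norm00_def rms_def iso_dist_def ..

lemma semi00_eq_rms: "semi00 d1 d2 x0 R A u = rms A (grad_dist R u)"
  unfolding semi00_def rms_def grad_dist_def ..

lemma admissibleD:
  assumes "(\<forall>g\<in>G. u g \<in> carrier_vec d) \<and> N \<ge> 1 \<and> m0 dvd N \<and> periodic G (Tpow d T N) u"
  shows "displacement u" "admissible_period N" "periodic G (TN N) u"
  using assms unfolding displacement_def admissible_period_def TN_def by auto

lemma norm00_le_semi00: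
  assumes "property2 d G x0 R" "property2 d G x0 H"
  shows "\<exists>A\<ge>1. \<forall>u N. displacement u \<longrightarrow> admissible_period N \<longrightarrow> periodic G (TN N) u \<longrightarrow>
    norm00 d1 d2 x0 H (C N) u \<le> A * semi00 d1 d2 x0 R (C N) u"
proof -
  obtain K where K: "0 \<le> K" and sums: "\<forall>u N. displacement u \<longrightarrow> admissible_period N \<longrightarrow>
      periodic G (TN N) u \<longrightarrow> (\<Sum>g\<in>C N. (iso_dist H u g)\<^sup>2) \<le> K * (\<Sum>g\<in>C N. (grad_dist R u g)\<^sup>2)"
    using sum_iso_dist_sq_le_sum_grad_dist_sq[OF assms(1) property2D(1)[OF assms(2)]] by blast
  have "norm00 d1 d2 x0 H (C N) u \<le> (1 + sqrt K) * semi00 d1 d2 x0 R (C N) u"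
    if "displacement u" "admissible_period N" "periodic G (TN N) u" for u N
    unfolding norm00_eq_rms semi00_eq_rms
    by (rule le_mult_factor_mono[OF rms_le_sqrt_mult[OF K sums[rule_format, OF that]]]) (simp_all add: rms_nonneg)
  then show ?thesis using K by (intro exI[of _ "1 + sqrt K"]) auto
qed

lemma semi00_le_norm00:
  assumes "property2 d G x0 R"
  shows "\<exists>B\<ge>1. \<forall>u N. displacement u \<longrightarrow> admissible_period N \<longrightarrow>
    semi00 d1 d2 x0 R (C N) u \<le> B * norm00 d1 d2 x0 R (C N) u"
proof -
  note R = property2D[OF assms]
  define b where "b = sqrt (2 * (1 + real (card R)))"
  have b: "0 \<le> b" unfolding b_def by simp
  have "semi00 d1 d2 x0 R (C N) u \<le> (1 + b) * norm00 d1 d2 x0 R (C N) u"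
    if u: "displacement u" and N: "admissible_period N" for u N
  proof -
    have "grad_dist R u g \<le> b * iso_dist R u g" if "g \<in> C N" for g
      unfolding b_def using grad_dist_le_iso_dist[OF R(1,2) u] that C_representatives(1)[OF N] by blast
    then have "rms (C N) (grad_dist R u) \<le> \<bar>b\<bar> * rms (C N) (iso_dist R u)"
      using grad_dist_nonneg[OF R(1)] by (intro rms_le_mult) auto
    then show ?thesis unfolding norm00_eq_rms semi00_eq_rms
      by (rule le_mult_factor_mono) (simp_all add: rms_nonneg b)
  qed
  then show ?thesis using b by (intro exI[of _ "1 + b"]) auto
qed

lemma seminorms_equivalent:
  assumes R1: "property2 d G x0 R1" and R2: "property2 d G x0 R2"
  shows "\<exists>c>0. \<forall>u N. (\<forall>g\<in>G. u g \<in> carrier_vec d) \<and> N \<ge> 1 \<and> m0 dvd N \<and> periodic G (Tpow d T N) u \<longrightarrow>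
    (\<forall>p\<in>set (seminorm_list R1 R2 N). \<forall>q\<in>set (seminorm_list R1 R2 N). p u \<le> c * q u)"
proof -
  obtain A11 where A11: "A11 \<ge> 1" "\<forall>u N. displacement u \<longrightarrow> admissible_period N \<longrightarrow> periodic G (TN N) u \<longrightarrow>
      norm00 d1 d2 x0 R1 (C N) u \<le> A11 * semi00 d1 d2 x0 R1 (C N) u"
    using norm00_le_semi00[OF R1 R1] by blast
  obtain A12 where A12: "A12 \<ge> 1" "\<forall>u N. displacement u \<longrightarrow> admissible_period N \<longrightarrow> periodic G (TN N) u \<longrightarrow>
      norm00 d1 d2 x0 R1 (C N) u \<le> A12 * semi00 d1 d2 x0 R2 (C N) u"
    using norm00_le_semi00[OF R2 R1] by blast
  obtain A21 where A21: "A21 \<ge> 1" "\<forall>u N. displacement u \<longrightarrow> admissible_period N \<longrightarrow> periodic G (TN N) u \<longrightarrow>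
      norm00 d1 d2 x0 R2 (C N) u \<le> A21 * semi00 d1 d2 x0 R1 (C N) u"
    using norm00_le_semi00[OF R1 R2] by blast
  obtain A22 where A22: "A22 \<ge> 1" "\<forall>u N. displacement u \<longrightarrow> admissible_period N \<longrightarrow> periodic G (TN N) u \<longrightarrow>
      norm00 d1 d2 x0 R2 (C N) u \<le> A22 * semi00 d1 d2 x0 R2 (C N) u"
    using norm00_le_semi00[OF R2 R2] by blast
  obtain B1 where B1: "B1 \<ge> 1" "\<forall>u N. displacement u \<longrightarrow> admissible_period N \<longrightarrow>
      semi00 d1 d2 x0 R1 (C N) u \<le> B1 * norm00 d1 d2 x0 R1 (C N) u"
    using semi00_le_norm00[OF R1] by blast
  obtain B2 where B2: "B2 \<ge> 1" "\<forall>u N. displacement u \<longrightarrow> admissible_period N \<longrightarrow>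
      semi00 d1 d2 x0 R2 (C N) u \<le> B2 * norm00 d1 d2 x0 R2 (C N) u"
    using semi00_le_norm00[OF R2] by blast
  define A where "A = max (max A11 A12) (max A21 A22)"
  define B where "B = max B1 B2"
  have AB: "1 \<le> A" "1 \<le> B" unfolding A_def B_def using A11 B1 by auto
  have le_A: "A11 \<le> A" "A12 \<le> A" "A21 \<le> A" "A22 \<le> A" and le_B: "B1 \<le> B" "B2 \<le> B"
    unfolding A_def B_def by auto
  have "\<forall>p\<in>set (seminorm_list R1 R2 N). \<forall>q\<in>set (seminorm_list R1 R2 N). p u \<le> A * B * B * q u"
    if hyps: "(\<forall>g\<in>G. u g \<in> carrier_vec d) \<and> N \<ge> 1 \<and> m0 dvd N \<and> periodic G (Tpow d T N) u" for u N
  proof -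
    note adm = admissibleD[OF hyps]
    have nonneg: "0 \<le> norm00 d1 d2 x0 R1 (C N) u" "0 \<le> norm00 d1 d2 x0 R2 (C N) u"
      "0 \<le> semi00 d1 d2 x0 R1 (C N) u" "0 \<le> semi00 d1 d2 x0 R2 (C N) u"
      unfolding norm00_eq_rms semi00_eq_rms by (rule rms_nonneg)+
    have "\<forall>p\<in>{norm00 d1 d2 x0 R1 (C N) u, norm00 d1 d2 x0 R2 (C N) u, semi00 d1 d2 x0 R1 (C N) u,
        semi00 d1 d2 x0 R2 (C N) u}. \<forall>q\<in>{norm00 d1 d2 x0 R1 (C N) u, norm00 d1 d2 x0 R2 (C N) u,
        semi00 d1 d2 x0 R1 (C N) u, semi00 d1 d2 x0 R2 (C N) u}. p \<le> A * B * B * q"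
    proof (rule le_all_pairs_of_cross_bounds[OF nonneg AB])
      show "norm00 d1 d2 x0 R1 (C N) u \<le> A * semi00 d1 d2 x0 R1 (C N) u"
        by (rule le_mult_factor_mono[OF A11(2)[rule_format, OF adm] le_A(1) nonneg(3)])
      show "norm00 d1 d2 x0 R1 (C N) u \<le> A * semi00 d1 d2 x0 R2 (C N) u"
        by (rule le_mult_factor_mono[OF A12(2)[rule_format, OF adm] le_A(2) nonneg(4)])
      show "norm00 d1 d2 x0 R2 (C N) u \<le> A * semi00 d1 d2 x0 R1 (C N) u"
        by (rule le_mult_factor_mono[OF A21(2)[rule_format, OF adm] le_A(3) nonneg(3)])
      show "norm00 d1 d2 x0 R2 (C N) u \<le> A * semi00 d1 d2 x0 R2 (C N) u"
        by (rule le_mult_factor_mono[OF A22(2)[rule_format, OF adm] le_A(4) nonneg(4)])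
      show "semi00 d1 d2 x0 R1 (C N) u \<le> B * norm00 d1 d2 x0 R1 (C N) u"
        by (rule le_mult_factor_mono[OF B1(2)[rule_format, OF adm(1,2)] le_B(1) nonneg(1)])
      show "semi00 d1 d2 x0 R2 (C N) u \<le> B * norm00 d1 d2 x0 R2 (C N) u"
        by (rule le_mult_factor_mono[OF B2(2)[rule_format, OF adm(1,2)] le_B(2) nonneg(2)])
    qed
    then show ?thesis by simp
  qed
  moreover have "0 < A * B * B" using AB by simp
  ultimately show ?thesis by blast
qed

lemma seminorms_kernel:
  assumes R1: "property2 d G x0 R1" and R2: "property2 d G x0 R2"
  shows "\<forall>u N. (\<forall>g\<in>G. u g \<in> carrier_vec d) \<and> N \<ge> 1 \<and> m0 dvd N \<and> periodic G (Tpow d T N) u \<longrightarrow>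
    (\<forall>p\<in>set (seminorm_list R1 R2 N). p u = 0 \<longleftrightarrow> u \<in> U_iso00 d1 d2 x0 G)"
proof (intro allI impI ballI)
  fix u N p assume hyps: "(\<forall>g\<in>G. u g \<in> carrier_vec d) \<and> N \<ge> 1 \<and> m0 dvd N \<and> periodic G (Tpow d T N) u"
    and p: "p \<in> set (seminorm_list R1 R2 N)"
  note adm = admissibleD[OF hyps]
  note C = C_representatives[OF adm(2)]
  obtain c where equiv: "\<forall>p\<in>set (seminorm_list R1 R2 N). \<forall>q\<in>set (seminorm_list R1 R2 N). p u \<le> c * q u"
    using seminorms_equivalent[OF R1 R2] hyps by blast
  have C_ne: "C N \<noteq> {}" using C(3)[OF eid_G] by blast
  have p_nonneg: "0 \<le> p u"
    using p rms_nonneg unfolding norm00_eq_rms semi00_eq_rms by auto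
  \<comment> \<open>By the equivalence, \<open>p u = 0\<close> iff \<open>[u]\<close> vanishes for one (any) stencil.\<close>
  have "p u = 0 \<longleftrightarrow> semi00 d1 d2 x0 R2 (C N) u = 0"
    using equiv p p_nonneg rms_nonneg[of "C N" "grad_dist R2 u"] unfolding semi00_eq_rms
    by (metis (no_types, lifting) list.set_intros(2) list.set_intros(1) mult_zero_right order_antisym)
  also have "\<dots> \<longleftrightarrow> (\<forall>g\<in>G. grad_dist R2 u g = 0)"
  proof
    assume "semi00 d1 d2 x0 R2 (C N) u = 0"
    then have "\<forall>g\<in>C N. grad_dist R2 u g = 0" unfolding semi00_eq_rms using rms_eq_0_iff[OF C(2) C_ne] by blast
    then show "\<forall>g\<in>G. grad_dist R2 u g = 0"
      using zero_on_G_if_zero_on_C[OF adm(2)] grad_dist_periodic[OF adm(2,3) property2D(1)[OF R2]] by blast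
  next
    assume "\<forall>g\<in>G. grad_dist R2 u g = 0"
    then show "semi00 d1 d2 x0 R2 (C N) u = 0" unfolding semi00_eq_rms using rms_eq_0_iff[OF C(2) C_ne] C(1) by blast
  qed
  also have "\<dots> \<longleftrightarrow> u \<in> U_iso00 d1 d2 x0 G"
  proof
    assume "\<forall>g\<in>G. grad_dist R2 u g = 0"
    then obtain X where "X \<in> skew d1" "\<forall>x\<in>G. rot_disp u x = u (eid d) + pad X *\<^sub>v (orb x - x0)"
      using rigid_if_grad_dist_zero[OF R2 adm(1)] by blast
    then show "u \<in> U_iso00 d1 d2 x0 G" using mem_U_iso00_if_rigid[OF adm(1)] by blast
  next
    assume "u \<in> U_iso00 d1 d2 x0 G"
    then obtain X where "X \<in> skew d1" "\<forall>x\<in>G. rot_disp u x = u (eid d) + pad X *\<^sub>v (orb x - x0)"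
      using rigid_if_mem_U_iso00[OF adm(1)] by blast
    then show "\<forall>g\<in>G. grad_dist R2 u g = 0"
      using grad_dist_zero_if_rigid[OF property2D(1)[OF R2] adm(1)] by blast
  qed
  finally show "p u = 0 \<longleftrightarrow> u \<in> U_iso00 d1 d2 x0 G" .
qed

end

theorem theorem4p3:
  fixes d1 d2 d daff m0 :: nat and S G T :: "euc set" and x0 :: "real vec"
    and C :: "nat \<Rightarrow> euc set" and R1 R2 :: "euc set"
  assumes d_def: "d = d1 + d2"
    and S_sg: "space_group d2 S"
    and G_sub: "subgroup_E d G" and G_disc: "discrete_E d G"
    and G_form: "G \<subseteq> {osum d1 d2 A s | A s. A \<in> orth_mat d1 \<and> s \<in> S}"
    and G_onto: "proj2 d1 d2 ` G = S"
    and T_sub: "T \<subseteq> G"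
    and T_bij: "bij_betw (proj2 d1 d2) T (transl_sub d2 S)"
    and m0_pos: "m0 \<ge> 1"
    and M_char: "\<forall>N\<ge>1. normal_sub_E d (Tpow d T N) G \<longleftrightarrow> m0 dvd N"
    and C_rep: "\<forall>N\<ge>1. m0 dvd N \<longrightarrow> C N \<subseteq> G \<and> finite (C N)
                  \<and> (\<forall>g\<in>G. \<exists>!c\<in>C N. \<exists>t\<in>Tpow d T N. g = emult c t)"
    and x0_dim: "x0 \<in> carrier_vec d"
    and x0_inj: "inj_on (\<lambda>g. eact g x0) G"
    and daff_le: "daff \<le> d"
    and aff_coord: "aff_hull d ((\<lambda>g. eact g x0) ` G) = {x \<in> carrier_vec d. \<forall>i < d - daff. x $ i = 0}"
    and triv_act: "\<forall>g\<in>G. \<forall>x\<in>carrier_vec d. (\<forall>i. d - daff \<le> i \<and> i < d \<longrightarrow> x $ i = 0)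
                      \<longrightarrow> rot g *\<^sub>v x = x"
    and R1_p2: "property2 d G x0 R1" and R2_p2: "property2 d G x0 R2"
  shows "(\<exists>c>0. \<forall>u N. (\<forall>g\<in>G. u g \<in> carrier_vec d) \<and> N \<ge> 1 \<and> m0 dvd N
              \<and> periodic G (Tpow d T N) u \<longrightarrow>
            (\<forall>p\<in>set [norm00 d1 d2 x0 R1 (C N), norm00 d1 d2 x0 R2 (C N),
                      semi00 d1 d2 x0 R1 (C N), semi00 d1 d2 x0 R2 (C N)].
             \<forall>q\<in>set [norm00 d1 d2 x0 R1 (C N), norm00 d1 d2 x0 R2 (C N),
                      semi00 d1 d2 x0 R1 (C N), semi00 d1 d2 x0 R2 (C N)].
               p u \<le> c * q u))
       \<and> (\<forall>u N. (\<forall>g\<in>G. u g \<in> carrier_vec d) \<and> N \<ge> 1 \<and> m0 dvd N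
              \<and> periodic G (Tpow d T N) u \<longrightarrow>
            (\<forall>p\<in>set [norm00 d1 d2 x0 R1 (C N), norm00 d1 d2 x0 R2 (C N),
                      semi00 d1 d2 x0 R1 (C N), semi00 d1 d2 x0 R2 (C N)].
               p u = 0 \<longleftrightarrow> u \<in> U_iso00 d1 d2 x0 G))"
proof -
  interpret objective_structure d1 d2 d daff m0 S G T x0 C
    using d_def S_sg G_sub G_form M_char C_rep x0_dim x0_inj aff_coord triv_act
    by (rule objective_structure.intro)
  show ?thesis
    using seminorms_equivalent[OF R1_p2 R2_p2] seminorms_kernel[OF R1_p2 R2_p2] by blast
qed

end
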